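(* Let $M,N$ be $\lambda\mu$-terms with $\lambda\mu\vdash M=N$. If $\Gamma\vdash M:\delta\mid\Delta$ is derivable in the intersection type assignment system, then $\Gamma\vdash N:\delta\mid\Delta$ is derivable.
   Context: $\lambda\mu$-calculus. Terms and commands: $M::=x\mid\lambda x.M\mid MN\mid\mu\alpha.\mathsf C$ and $\mathsf C::=[\alpha]M$, up to renaming of bound variables and names. Structural substitution $T[\alpha\Leftarrow L]$ replaces, recursively, every subterm $[\alpha]N$ by $[\alpha](N[\alpha\Leftarrow L])L$ and leaves everything else unchanged. $\to_{\beta\mu}$ is the compatible closure of: - $(\lambda x.M)N\to M[N/x]$; - $(\mu\alpha.\mathsf C)N\to\mu\alpha.\mathsf C[\alpha\Leftarrow N]$; - $[\alpha]\mu\beta.\mathsf C\to\mathsf C[\alpha/\beta]$. $\lambda\mu\vdash M=N$ is the equational theory it generates. Types (for a fixed $\omega$-algebraic lattice $R$ with compact elements $\mathcal K(R)$): - $\Lambda_R$: $\rho::=\psi_a\mid\omega\mid\rho\wedge\rho$; - $\Lambda_D$: $\delta::=\rho\mid\kappa\to\rho\mid\omega\mid\delta\wedge\delta$; - $\Lambda_C$: $\kappa::=\delta\times\kappa\mid\omega\mid\kappa\wedge\kappa$. The relations $\le_R,\le_D,\le_C$ are the least reflexive, transitive relations with $\sigma\wedge\tau\le\sigma,\tau$, $\sigma\le\omega$, $\rho\le\sigma,\tau\Rightarrow\rho\le\sigma\wedge\tau$, and additionally: - $\psi_\bot\sim\omega$ and $\psi_{a\sqcup b}\sim\psi_a\wedge\psi_b$;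 - $\le_R\subseteq\le_D$; - $\omega\le_D\omega\to\omega$; - $\psi_a\le_D\omega\to\psi_a\le_D\psi_a$; - $\omega\le_C\omega\times\omega$; - $(\kappa\to\rho_1)\wedge(\kappa\to\rho_2)\le_D\kappa\to(\rho_1\wedge\rho_2)$; - $(\delta_1\times\kappa_1)\wedge(\delta_2\times\kappa_2)\le_C(\delta_1\wedge\delta_2)\times(\kappa_1\wedge\kappa_2)$; - $\to$ is contravariant in $\Lambda_C$ and covariant in $\Lambda_R$; - $\times$ is covariant in both arguments. Type assignment. Bases $\Gamma$ are finite maps from variables to $\Lambda_D$, and contexts $\Delta$ are finite maps from names to $\Lambda_C$. $\Gamma(x)$ and $\Delta(\alpha)$ are $\omega$ outside the domain. The rules are: - (Ax) $\Gamma,x{:}\delta\vdash x:\delta\mid\Delta$. - (Abs) From $\Gamma\vdash M:\kappa\to\rho\mid\Delta$, $\Gamma(x)=\delta$, infer $\Gamma\setminus x\vdash\lambda x.M:(\delta\times\kappa)\to\rho\mid\Delta$. - (App) From $\Gamma\vdash M:(\delta\times\kappa)\to\rho\mid\Delta$ and $\Gamma\vdash N:\delta\mid\Delta$, infer $\Gamma\vdash MN:\kappa\to\rho\mid\Delta$. - (Cmd) From $\Gamma\vdash M:\delta\mid\Delta$, $\Delta(\alpha)=\kappa$, infer $\Gamma\vdash[\alpha]M:\delta\times\kappa\mid\Delta$. - ($\mu$) From $\Gamma\vdash\mathsf C:(\kappa'\to\rho)\times\kappa'\mid\Delta$, $\Delta(\alpha)=\kappa$, infer $\Gamma\vdash\mu\alpha.\mathsf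 C:\kappa\to\rho\mid\Delta\setminus\alpha$. - ($\wedge$) intersection introduction; ($\omega$) every $T$ has type $\omega$; ($\le$) subsumption. Variables in $\Gamma$ and names in $\Delta$ are assumed not bound in the subject. *)

theory Defs
  imports Main "HOL-Library.Countable_Set"
begin

text \<open>Terms and commands of the lambda-mu calculus, up to alpha-conversion, represented
with de Bruijn indices. Term variables and names (mu-variables) live in two separate
index spaces: Lam binds term variable 0, Mu binds name 0.\<close>

datatype trm = Var nat | Lam trm | App trm trm | Mu cmd
     and cmd = Cmd nat trm

primrec liftV :: "nat \<Rightarrow> trm \<Rightarrow> trm" and liftVc :: "nat \<Rightarrow> cmd \<Rightarrow> cmd" where
  "liftV k (Var i) = (if i < k then Var i else Var (Suc i))"
| "liftV k (Lam M) = Lam (liftV (Suc k) M)"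
| "liftV k (App M N) = App (liftV k M) (liftV k N)"
| "liftV k (Mu C) = Mu (liftVc k C)"
| "liftVc k (Cmd a M) = Cmd a (liftV k M)"

primrec liftN :: "nat \<Rightarrow> trm \<Rightarrow> trm" and liftNc :: "nat \<Rightarrow> cmd \<Rightarrow> cmd" where
  "liftN k (Var i) = Var i"
| "liftN k (Lam M) = Lam (liftN k M)"
| "liftN k (App M N) = App (liftN k M) (liftN k N)"
| "liftN k (Mu C) = Mu (liftNc (Suc k) C)"
| "liftNc k (Cmd a M) = Cmd (if a < k then a else Suc a) (liftN k M)"

primrec substV :: "trm \<Rightarrow> nat \<Rightarrow> trm \<Rightarrow> trm"
    and substVc :: "cmd \<Rightarrow> nat \<Rightarrow> trm \<Rightarrow> cmd" where
  "substV (Var i) k N = (if i < k then Var i else if i = k then N else Var (i - 1))"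
| "substV (Lam M) k N = Lam (substV M (Suc k) (liftV 0 N))"
| "substV (App M1 M2) k N = App (substV M1 k N) (substV M2 k N)"
| "substV (Mu C) k N = Mu (substVc C k (liftN 0 N))"
| "substVc (Cmd a M) k N = Cmd a (substV M k N)"

primrec struct :: "trm \<Rightarrow> nat \<Rightarrow> trm \<Rightarrow> trm"
    and structc :: "cmd \<Rightarrow> nat \<Rightarrow> trm \<Rightarrow> cmd" where
  "struct (Var i) a L = Var i"
| "struct (Lam M) a L = Lam (struct M a (liftV 0 L))"
| "struct (App M1 M2) a L = App (struct M1 a L) (struct M2 a L)"
| "struct (Mu C) a L = Mu (structc C (Suc a) (liftN 0 L))"
| "structc (Cmd b M) a L =
     (if b = a then Cmd a (App (struct M a L) L) else Cmd b (struct M a L))"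

primrec renN :: "trm \<Rightarrow> nat \<Rightarrow> nat \<Rightarrow> trm"
    and renNc :: "cmd \<Rightarrow> nat \<Rightarrow> nat \<Rightarrow> cmd" where
  "renN (Var i) k a = Var i"
| "renN (Lam M) k a = Lam (renN M k a)"
| "renN (App M1 M2) k a = App (renN M1 k a) (renN M2 k a)"
| "renN (Mu C) k a = Mu (renNc C (Suc k) (Suc a))"
| "renNc (Cmd b M) k a =
     Cmd (if b < k then b else if b = k then a else b - 1) (renN M k a)"

inductive red :: "trm \<Rightarrow> trm \<Rightarrow> bool" and redc :: "cmd \<Rightarrow> cmd \<Rightarrow> bool" where
  beta: "red (App (Lam M) N) (substV M 0 N)"
| mu: "red (App (Mu C) N) (Mu (structc C 0 (liftN 0 N)))"
| ren: "redc (Cmd a (Mu C)) (renNc C 0 a)"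
| lam: "red M M' \<Longrightarrow> red (Lam M) (Lam M')"
| appL: "red M M' \<Longrightarrow> red (App M N) (App M' N)"
| appR: "red N N' \<Longrightarrow> red (App M N) (App M N')"
| muC: "redc C C' \<Longrightarrow> red (Mu C) (Mu C')"
| cmdC: "red M M' \<Longrightarrow> redc (Cmd a M) (Cmd a M')"

definition lmu_eq :: "trm \<Rightarrow> trm \<Rightarrow> bool" where
  "lmu_eq = equivclp red"

definition directed :: "'a::complete_lattice set \<Rightarrow> bool" where
  "directed D \<longleftrightarrow> D \<noteq> {} \<and> (\<forall>x\<in>D. \<forall>y\<in>D. \<exists>z\<in>D. x \<le> z \<and> y \<le> z)"

definition compact :: "'a::complete_lattice \<Rightarrow> bool" where
  "compact a \<longleftrightarrow> (\<forall>D. directed D \<and> a \<le> Sup D \<longrightarrow> (\<exists>d\<in>D. a \<le> d))"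

definition omega_algebraic :: "'a::complete_lattice itself \<Rightarrow> bool" where
  "omega_algebraic _ \<longleftrightarrow>
     countable {a::'a. compact a} \<and> (\<forall>x::'a. x = Sup {a. compact a \<and> a \<le> x})"

datatype 'a ity = TPsi 'a | TOm | TInter "'a ity" "'a ity" | TArr "'a ity" "'a ity"
  | TProd "'a ity" "'a ity"

datatype srt = SR | SD | SC

inductive wfty :: "srt \<Rightarrow> 'a::complete_lattice ity \<Rightarrow> bool" where
  psi: "compact a \<Longrightarrow> wfty SR (TPsi a)"
| om: "wfty s TOm"
| inter: "wfty s \<sigma> \<Longrightarrow> wfty s \<tau> \<Longrightarrow> wfty s (TInter \<sigma> \<tau>)"
| RD: "wfty SR \<rho> \<Longrightarrow> wfty SD \<rho>"
| arr: "wfty SC \<kappa> \<Longrightarrow> wfty SR \<rho> \<Longrightarrow> wfty SD (TArr \<kappa> \<rho>)"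
| prod: "wfty SD \<delta> \<Longrightarrow> wfty SC \<kappa> \<Longrightarrow> wfty SC (TProd \<delta> \<kappa>)"

inductive sub :: "srt \<Rightarrow> 'a::complete_lattice ity \<Rightarrow> 'a ity \<Rightarrow> bool" where
  refl: "wfty s \<sigma> \<Longrightarrow> sub s \<sigma> \<sigma>"
| trans: "sub s \<sigma> \<tau> \<Longrightarrow> sub s \<tau> \<upsilon> \<Longrightarrow> sub s \<sigma> \<upsilon>"
| interL: "wfty s \<sigma> \<Longrightarrow> wfty s \<tau> \<Longrightarrow> sub s (TInter \<sigma> \<tau>) \<sigma>"
| interR: "wfty s \<sigma> \<Longrightarrow> wfty s \<tau> \<Longrightarrow> sub s (TInter \<sigma> \<tau>) \<tau>"
| top: "wfty s \<sigma> \<Longrightarrow> sub s \<sigma> TOm"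
| glb: "sub s \<rho> \<sigma> \<Longrightarrow> sub s \<rho> \<tau> \<Longrightarrow> sub s \<rho> (TInter \<sigma> \<tau>)"
| psi_bot1: "sub SR (TPsi bot) TOm"
| psi_bot2: "sub SR TOm (TPsi bot)"
| psi_sup1: "compact a \<Longrightarrow> compact b \<Longrightarrow> sub SR (TPsi (sup a b)) (TInter (TPsi a) (TPsi b))"
| psi_sup2: "compact a \<Longrightarrow> compact b \<Longrightarrow> sub SR (TInter (TPsi a) (TPsi b)) (TPsi (sup a b))"
| RD: "sub SR \<sigma> \<tau> \<Longrightarrow> sub SD \<sigma> \<tau>"
| om_arr: "sub SD TOm (TArr TOm TOm)"
| psi_arr1: "compact a \<Longrightarrow> sub SD (TPsi a) (TArr TOm (TPsi a))"
| psi_arr2: "compact a \<Longrightarrow> sub SD (TArr TOm (TPsi a)) (TPsi a)"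
| om_prod: "sub SC TOm (TProd TOm TOm)"
| arr_inter: "wfty SC \<kappa> \<Longrightarrow> wfty SR \<rho>1 \<Longrightarrow> wfty SR \<rho>2 \<Longrightarrow>
    sub SD (TInter (TArr \<kappa> \<rho>1) (TArr \<kappa> \<rho>2)) (TArr \<kappa> (TInter \<rho>1 \<rho>2))"
| prod_inter: "wfty SD \<delta>1 \<Longrightarrow> wfty SD \<delta>2 \<Longrightarrow> wfty SC \<kappa>1 \<Longrightarrow> wfty SC \<kappa>2 \<Longrightarrow>
    sub SC (TInter (TProd \<delta>1 \<kappa>1) (TProd \<delta>2 \<kappa>2)) (TProd (TInter \<delta>1 \<delta>2) (TInter \<kappa>1 \<kappa>2))"
| arr_mono: "sub SC \<kappa>' \<kappa> \<Longrightarrow> sub SR \<rho> \<rho>' \<Longrightarrow> sub SD (TArr \<kappa> \<rho>) (TArr \<kappa>' \<rho>')"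
| prod_mono: "sub SD \<delta> \<delta>' \<Longrightarrow> sub SC \<kappa> \<kappa>' \<Longrightarrow> sub SC (TProd \<delta> \<kappa>) (TProd \<delta>' \<kappa>')"

text \<open>Bases and contexts are total maps that are omega outside a finite domain.
Extending a de Bruijn basis/context by a new innermost binder:\<close>
definition extend :: "'b \<Rightarrow> (nat \<Rightarrow> 'b) \<Rightarrow> nat \<Rightarrow> 'b" where
  "extend d G = (\<lambda>i. case i of 0 \<Rightarrow> d | Suc j \<Rightarrow> G j)"

definition is_basis :: "(nat \<Rightarrow> 'a::complete_lattice ity) \<Rightarrow> bool" where
  "is_basis G \<longleftrightarrow> finite {x. G x \<noteq> TOm} \<and> (\<forall>x. wfty SD (G x))"

definition is_context :: "(nat \<Rightarrow> 'a::complete_lattice ity) \<Rightarrow> bool" where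
  "is_context D \<longleftrightarrow> finite {a. D a \<noteq> TOm} \<and> (\<forall>a. wfty SC (D a))"

inductive has_type :: "(nat \<Rightarrow> 'a::complete_lattice ity) \<Rightarrow> trm \<Rightarrow> 'a ity \<Rightarrow> (nat \<Rightarrow> 'a ity) \<Rightarrow> bool"
  and cmd_type :: "(nat \<Rightarrow> 'a::complete_lattice ity) \<Rightarrow> cmd \<Rightarrow> 'a ity \<Rightarrow> (nat \<Rightarrow> 'a ity) \<Rightarrow> bool"
where
  Ax: "has_type G (Var x) (G x) D"
| Abs: "has_type (extend \<delta> G) M (TArr \<kappa> \<rho>) D \<Longrightarrow> wfty SD \<delta> \<Longrightarrow>
        has_type G (Lam M) (TArr (TProd \<delta> \<kappa>) \<rho>) D"
| App: "has_type G M (TArr (TProd \<delta> \<kappa>) \<rho>) D \<Longrightarrow> has_type G N \<delta> D \<Longrightarrow>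
        has_type G (App M N) (TArr \<kappa> \<rho>) D"
| Cmd: "has_type G M \<delta> D \<Longrightarrow> cmd_type G (Cmd a M) (TProd \<delta> (D a)) D"
| Mu: "cmd_type G C (TProd (TArr \<kappa>' \<rho>) \<kappa>') (extend \<kappa> D) \<Longrightarrow> wfty SC \<kappa> \<Longrightarrow>
        has_type G (Mu C) (TArr \<kappa> \<rho>) D"
| Inter: "has_type G M \<sigma> D \<Longrightarrow> has_type G M \<tau> D \<Longrightarrow> has_type G M (TInter \<sigma> \<tau>) D"
| Om: "has_type G M TOm D"
| Sub: "has_type G M \<sigma> D \<Longrightarrow> sub SD \<sigma> \<tau> \<Longrightarrow> has_type G M \<tau> D"
| CInter: "cmd_type G C \<sigma> D \<Longrightarrow> cmd_type G C \<tau> D \<Longrightarrow> cmd_type G C (TInter \<sigma> \<tau>) D"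
| COm: "cmd_type G C TOm D"
| CSub: "cmd_type G C \<sigma> D \<Longrightarrow> sub SC \<sigma> \<tau> \<Longrightarrow> cmd_type G C \<tau> D"

end

(*
  Typability is invariant under each of the three reduction rules, in both directions, and
  under the term formers; hence under the equational theory.

  The key is an analysis of subtyping through components.  Up to equivalence a type of Lambda_D
  is the intersection of its arrows kappa -> rho (psi_a counting as omega -> psi_a), and
  sigma <= kappa0 -> rho0 forces rho0, read as an element of R, to lie below the join of the
  codomains of those arrows of sigma whose domain is above kappa0.  Since <=_R is complete for
  this reading, every property of arrow types that is closed under omega, intersection of
  codomains and monotonicity propagates along <=_D.  This yields generation lemmas for
  abstractions, applications and mu-abstractions, which reduce beta and mu to (structural)
  substitution lemmas.  Their converses hold because the types that an argument receives at
  its several occurrences can always be intersected.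
*)
theory Submission
  imports Defs
begin

fun wf_ty :: "srt \<Rightarrow> 'a::complete_lattice ity \<Rightarrow> bool" where
  "wf_ty s TOm = True"
| "wf_ty s (TInter \<sigma> \<tau>) = (wf_ty s \<sigma> \<and> wf_ty s \<tau>)"
| "wf_ty SC (TPsi a) = False"
| "wf_ty s (TPsi a) = compact a"
| "wf_ty SD (TArr \<kappa> \<rho>) = (wf_ty SC \<kappa> \<and> wf_ty SR \<rho>)"
| "wf_ty SC (TProd \<delta> \<kappa>) = (wf_ty SD \<delta> \<and> wf_ty SC \<kappa>)"
| "wf_ty s \<sigma> = False"

lemma wf_ty_SR_SD: "wf_ty SR \<rho> \<Longrightarrow> wf_ty SD \<rho>"
  by (induction \<rho>) auto

lemma wfty_iff_wf_ty [simp]: "wfty s \<sigma> \<longleftrightarrow> wf_ty s \<sigma>"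
proof
  show "wfty s \<sigma> \<Longrightarrow> wf_ty s \<sigma>"
    by (induction rule: wfty.induct) (auto simp: wf_ty_SR_SD)
  show "wf_ty s \<sigma> \<Longrightarrow> wfty s \<sigma>"
    by (induction \<sigma> arbitrary: s; case_tac s) (auto intro: wfty.intros)
qed

lemma compact_bot: "compact (bot :: 'a::complete_lattice)"
  unfolding compact_def directed_def by auto

lemma compact_sup:
  fixes a b :: "'a::complete_lattice"
  assumes "compact a" and "compact b"
  shows "compact (sup a b)"
  unfolding compact_def
proof (intro allI impI)
  fix X :: "'a set"
  assume X: "directed X \<and> sup a b \<le> Sup X"
  then obtain x y where "x \<in> X" "a \<le> x" "y \<in> X" "b \<le> y"
    using assms unfolding compact_def by (meson le_supE)
  moreover from this X obtain z where "z \<in> X" "x \<le> z" "y \<le> z"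
    unfolding directed_def by blast
  ultimately show "\<exists>z\<in>X. sup a b \<le> z"
    by (meson le_supI order_trans)
qed

lemma sub_wf: "sub s \<sigma> \<tau> \<Longrightarrow> wf_ty s \<sigma> \<and> wf_ty s \<tau>"
  by (induction rule: sub.induct) (auto simp: compact_bot compact_sup wf_ty_SR_SD)

lemmas sub_refl = sub.refl[simplified]
lemmas sub_interL = sub.interL[simplified]
lemmas sub_interR = sub.interR[simplified]
lemmas sub_top = sub.top[simplified]
lemmas sub_arr_inter = sub.arr_inter[simplified]
lemmas sub_prod_inter = sub.prod_inter[simplified]

lemma sub_Om_Om [simp]: "sub s TOm TOm"
  by (simp add: sub_refl)

lemma sub_inter_mono: "sub s \<sigma> \<sigma>' \<Longrightarrow> sub s \<tau> \<tau>' \<Longrightarrow> sub s (TInter \<sigma> \<tau>) (TInter \<sigma>' \<tau>')"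
  by (meson sub.glb sub.trans sub_interL sub_interR sub_wf)

lemma sub_inter_Om: "wf_ty s \<sigma> \<Longrightarrow> sub s \<sigma> (TInter \<sigma> TOm)"
  by (simp add: sub.glb sub_refl sub_top)

definition meet :: "'a ity list \<Rightarrow> 'a ity" where
  "meet l = foldr TInter l TOm"

lemma meet_simps [simp]: "meet [] = TOm" "meet (\<sigma> # l) = TInter \<sigma> (meet l)"
  by (simp_all add: meet_def)

lemma wf_ty_meet: "\<forall>\<sigma>\<in>set l. wf_ty s \<sigma> \<Longrightarrow> wf_ty s (meet l)"
  by (induction l) auto

lemma sub_meet_member: "\<forall>\<tau>\<in>set l. wf_ty s \<tau> \<Longrightarrow> \<sigma> \<in> set l \<Longrightarrow> sub s (meet l) \<sigma>"
proof (induction l)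
  case (Cons \<tau> l)
  then have "sub s (TInter \<tau> (meet l)) \<tau>" and "sub s (TInter \<tau> (meet l)) (meet l)"
    by (simp_all add: sub_interL sub_interR wf_ty_meet)
  with Cons show ?case
    by (auto intro: sub.trans)
qed simp

lemma sub_meet_glb: "wf_ty s \<tau> \<Longrightarrow> \<forall>\<sigma>\<in>set l. sub s \<tau> \<sigma> \<Longrightarrow> sub s \<tau> (meet l)"
  by (induction l) (auto intro: sub.glb sub.top)

lemma sub_meet_subset: "\<forall>\<sigma>\<in>set l'. wf_ty s \<sigma> \<Longrightarrow> set l \<subseteq> set l' \<Longrightarrow> sub s (meet l') (meet l)"
  by (auto intro: sub_meet_glb wf_ty_meet sub_meet_member)

section \<open>The lattice semantics of \<open>\<Lambda>\<^sub>R\<close>\<close>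

text \<open>A type of \<open>\<Lambda>\<^sub>R\<close> denotes a compact element of the lattice; intersection is the join,
so that subtyping reverses the order.\<close>

fun val :: "'a::complete_lattice ity \<Rightarrow> 'a" where
  "val (TPsi a) = a"
| "val (TInter \<sigma> \<tau>) = sup (val \<sigma>) (val \<tau>)"
| "val _ = bot"

lemma val_antimono: "sub SR \<rho> \<rho>' \<Longrightarrow> val \<rho>' \<le> val \<rho>"
  by (induction SR \<rho> \<rho>' rule: sub.induct) (auto intro: le_supI1 le_supI2)

lemma compact_val: "wf_ty SR \<rho> \<Longrightarrow> compact (val \<rho>)"
  by (induction \<rho>) (auto simp: compact_bot compact_sup)

lemma sub_SR_TPsi_val: "wf_ty SR \<rho> \<Longrightarrow> sub SR \<rho> (TPsi (val \<rho>)) \<and> sub SR (TPsi (val \<rho>)) \<rho>"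
proof (induction \<rho>)
  case (TPsi a)
  then show ?case by (simp add: sub_refl)
next
  case TOm
  then show ?case by (simp add: sub.psi_bot1 sub.psi_bot2)
next
  case (TInter \<rho>1 \<rho>2)
  then have "compact (val \<rho>1)" "compact (val \<rho>2)"
    by (simp_all add: compact_val)
  with TInter show ?case
    by (auto intro: sub.trans[OF sub_inter_mono sub.psi_sup2] sub.trans[OF sub.psi_sup1 sub_inter_mono])
qed auto

lemma sub_TPsi_antimono: "compact a \<Longrightarrow> compact b \<Longrightarrow> b \<le> a \<Longrightarrow> sub SR (TPsi a) (TPsi b)"
  using sub.psi_sup1[of a b] sub_interR[of SR "TPsi a" "TPsi b"]
  by (simp add: sup_absorb1 sub.trans)

lemma sub_SR_if_val_le: "wf_ty SR \<rho> \<Longrightarrow> wf_ty SR \<rho>' \<Longrightarrow> val \<rho>' \<le> val \<rho> \<Longrightarrow> sub SR \<rho> \<rho>'"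
  by (meson compact_val sub.trans sub_SR_TPsi_val sub_TPsi_antimono)

lemma val_meet: "val (meet l) = Sup (val ` set l)"
  by (induction l) auto

section \<open>Arrow and product components\<close>

text \<open>Modulo \<open>\<sim>\<close>, a type of \<open>\<Lambda>\<^sub>D\<close> is the intersection of its arrow components (reading \<open>\<psi>\<^sub>a\<close>
as \<open>\<omega> \<rightarrow> \<psi>\<^sub>a\<close>) and a type of \<open>\<Lambda>\<^sub>C\<close> the intersection of its product components.\<close>

fun arrows :: "'a ity \<Rightarrow> ('a ity \<times> 'a ity) list" where
  "arrows (TPsi a) = [(TOm, TPsi a)]"
| "arrows (TInter \<sigma> \<tau>) = arrows \<sigma> @ arrows \<tau>"
| "arrows (TArr \<kappa> \<rho>) = [(\<kappa>, \<rho>)]"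
| "arrows _ = []"

fun prods :: "'a ity \<Rightarrow> ('a ity \<times> 'a ity) list" where
  "prods (TInter \<sigma> \<tau>) = prods \<sigma> @ prods \<tau>"
| "prods (TProd \<delta> \<kappa>) = [(\<delta>, \<kappa>)]"
| "prods _ = []"

lemma wf_ty_arrows: "wf_ty SD \<sigma> \<Longrightarrow> (\<kappa>, \<rho>) \<in> set (arrows \<sigma>) \<Longrightarrow> wf_ty SC \<kappa> \<and> wf_ty SR \<rho>"
  by (induction \<sigma>) auto

lemma wf_ty_prods: "wf_ty SC \<kappa> \<Longrightarrow> (\<delta>, \<kappa>') \<in> set (prods \<kappa>) \<Longrightarrow> wf_ty SD \<delta> \<and> wf_ty SC \<kappa>'"
  by (induction \<kappa>) auto

lemma arrows_SR: "wf_ty SR \<rho> \<Longrightarrow> (\<kappa>, \<rho>') \<in> set (arrows \<rho>) \<Longrightarrow> \<kappa> = TOm \<and> val \<rho>' \<le> val \<rho>"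
  by (induction \<rho>) (auto intro: le_supI1 le_supI2)

text \<open>The join of the codomains of those arrows of \<open>\<sigma>\<close> whose domain lies above \<open>\<kappa>\<^sub>0\<close>: the best
codomain that \<open>\<sigma> \<le>\<^sub>D \<kappa>\<^sub>0 \<rightarrow> \<rho>\<^sub>0\<close> can yield.\<close>

definition arrow_sup :: "'a::complete_lattice ity \<Rightarrow> 'a ity \<Rightarrow> 'a" where
  "arrow_sup \<sigma> \<kappa>\<^sub>0 = Sup {val \<rho> |\<kappa> \<rho>. (\<kappa>, \<rho>) \<in> set (arrows \<sigma>) \<and> sub SC \<kappa>\<^sub>0 \<kappa>}"

definition arrow_cover :: "'a::complete_lattice ity \<Rightarrow> 'a ity \<Rightarrow> bool" where
  "arrow_cover \<sigma> \<tau> \<longleftrightarrow> (\<forall>(\<kappa>\<^sub>0, \<rho>\<^sub>0) \<in> set (arrows \<tau>). val \<rho>\<^sub>0 \<le> arrow_sup \<sigma> \<kappa>\<^sub>0)"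

lemma arrow_sup_upper: "(\<kappa>, \<rho>) \<in> set (arrows \<sigma>) \<Longrightarrow> sub SC \<kappa>\<^sub>0 \<kappa> \<Longrightarrow> val \<rho> \<le> arrow_sup \<sigma> \<kappa>\<^sub>0"
  unfolding arrow_sup_def by (rule Sup_upper) blast

lemma arrow_sup_mono: "set (arrows \<sigma>) \<subseteq> set (arrows \<sigma>') \<Longrightarrow> arrow_sup \<sigma> \<kappa>\<^sub>0 \<le> arrow_sup \<sigma>' \<kappa>\<^sub>0"
  unfolding arrow_sup_def by (rule Sup_subset_mono) blast

lemma arrow_sup_antimono: "sub SC \<kappa>\<^sub>0 \<kappa>\<^sub>1 \<Longrightarrow> arrow_sup \<sigma> \<kappa>\<^sub>1 \<le> arrow_sup \<sigma> \<kappa>\<^sub>0"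
  unfolding arrow_sup_def by (rule Sup_subset_mono) (blast intro: sub.trans)

lemma arrow_cover_subset:
  assumes "wf_ty SD \<tau>" and "set (arrows \<tau>) \<subseteq> set (arrows \<sigma>)"
  shows "arrow_cover \<sigma> \<tau>"
  using assms unfolding arrow_cover_def
  by (auto intro!: arrow_sup_upper sub_refl dest: wf_ty_arrows)

lemma arrow_cover_trans:
  assumes "arrow_cover \<sigma> \<tau>" and "arrow_cover \<tau> \<upsilon>"
  shows "arrow_cover \<sigma> \<upsilon>"
proof -
  have "arrow_sup \<tau> \<kappa>\<^sub>0 \<le> arrow_sup \<sigma> \<kappa>\<^sub>0" for \<kappa>\<^sub>0
    unfolding arrow_sup_def[of \<tau>]
  proof (rule Sup_least)
    fix x assume "x \<in> {val \<rho> |\<kappa> \<rho>. (\<kappa>, \<rho>) \<in> set (arrows \<tau>) \<and> sub SC \<kappa>\<^sub>0 \<kappa>}"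
    then obtain \<kappa> \<rho> where "x = val \<rho>" "(\<kappa>, \<rho>) \<in> set (arrows \<tau>)" "sub SC \<kappa>\<^sub>0 \<kappa>"
      by blast
    with assms(1) show "x \<le> arrow_sup \<sigma> \<kappa>\<^sub>0"
      unfolding arrow_cover_def by (blast intro: order_trans arrow_sup_antimono)
  qed
  with assms(2) show ?thesis
    unfolding arrow_cover_def by (blast intro: order_trans)
qed

lemma val_le_arrow_sup_Om: "wf_ty SR \<rho> \<Longrightarrow> val \<rho> \<le> arrow_sup \<rho> TOm"
proof (induction \<rho>)
  case (TPsi a)
  then show ?case
    using arrow_sup_upper[of TOm "TPsi a" "TPsi a" TOm] by simp
next
  case (TInter \<rho>1 \<rho>2)
  moreover have "arrow_sup \<rho>1 TOm \<le> arrow_sup (TInter \<rho>1 \<rho>2) TOm"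
    and "arrow_sup \<rho>2 TOm \<le> arrow_sup (TInter \<rho>1 \<rho>2) TOm"
    by (simp_all add: arrow_sup_mono)
  ultimately show ?case
    by simp (meson le_supI order_trans)
qed (auto simp: arrow_sup_def)

lemma arrow_cover_if_sub_SR:
  assumes "sub SR \<rho> \<rho>'"
  shows "arrow_cover \<rho> \<rho>'"
proof -
  have wf: "wf_ty SR \<rho>" "wf_ty SR \<rho>'"
    using sub_wf[OF assms] by simp_all
  have "val \<rho>\<^sub>0 \<le> arrow_sup \<rho> \<kappa>\<^sub>0" if "(\<kappa>\<^sub>0, \<rho>\<^sub>0) \<in> set (arrows \<rho>')" for \<kappa>\<^sub>0 \<rho>\<^sub>0
  proof -
    have "\<kappa>\<^sub>0 = TOm" and "val \<rho>\<^sub>0 \<le> val \<rho>'"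
      using arrows_SR[OF wf(2) that] by auto
    moreover have "val \<rho>' \<le> val \<rho>"
      using assms by (rule val_antimono)
    moreover have "val \<rho> \<le> arrow_sup \<rho> TOm"
      using wf(1) by (rule val_le_arrow_sup_Om)
    ultimately show ?thesis
      by (meson order_trans)
  qed
  then show ?thesis
    unfolding arrow_cover_def by auto
qed

lemma sub_arrow_cover: "sub SD \<sigma> \<tau> \<Longrightarrow> arrow_cover \<sigma> \<tau>"
proof (induction SD \<sigma> \<tau> rule: sub.induct)
  case (trans \<sigma> \<tau> \<upsilon>)
  then show ?case
    using arrow_cover_trans by blast
next
  case (RD \<rho> \<rho>')
  then show ?case
    by (rule arrow_cover_if_sub_SR)
next
  case (arr_inter \<kappa> \<rho>1 \<rho>2)
  then have "sub SC \<kappa> \<kappa>"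
    by (simp add: sub_refl)
  then have "val \<rho>1 \<le> arrow_sup (TInter (TArr \<kappa> \<rho>1) (TArr \<kappa> \<rho>2)) \<kappa>"
    and "val \<rho>2 \<le> arrow_sup (TInter (TArr \<kappa> \<rho>1) (TArr \<kappa> \<rho>2)) \<kappa>"
    by (auto intro!: arrow_sup_upper)
  then show ?case
    by (simp add: arrow_cover_def)
next
  case (arr_mono \<kappa>' \<kappa> \<rho> \<rho>')
  have "val \<rho>' \<le> val \<rho>"
    using arr_mono(2) by (rule val_antimono)
  also have "\<dots> \<le> arrow_sup (TArr \<kappa> \<rho>) \<kappa>'"
    using arr_mono(1) by (simp add: arrow_sup_upper)
  finally show ?case
    by (simp add: arrow_cover_def)
next
  case (psi_arr1 a)
  then show ?case
    using arrow_sup_upper[of TOm "TPsi a" "TPsi a" TOm] by (simp add: arrow_cover_def)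
next
  case (psi_arr2 a)
  then show ?case
    using arrow_sup_upper[of TOm "TPsi a" "TArr TOm (TPsi a)" TOm] by (simp add: arrow_cover_def)
next
  case (glb \<rho> \<sigma> \<tau>)
  then show ?case
    by (simp add: arrow_cover_def ball_Un)
qed (simp_all add: arrow_cover_subset, simp_all add: arrow_cover_def)

definition head_meet :: "'a ity \<Rightarrow> 'a ity" where
  "head_meet \<kappa> = meet (map fst (prods \<kappa>))"

definition tail_meet :: "'a ity \<Rightarrow> 'a ity" where
  "tail_meet \<kappa> = meet (map snd (prods \<kappa>))"

lemma head_tail_meet_TProd [simp]:
  "head_meet (TProd \<delta> \<kappa>) = TInter \<delta> TOm" "tail_meet (TProd \<delta> \<kappa>) = TInter \<kappa> TOm"
  by (simp_all add: head_meet_def tail_meet_def)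

lemma head_tail_meet_TOm [simp]: "head_meet TOm = TOm" "tail_meet TOm = TOm"
  by (simp_all add: head_meet_def tail_meet_def)

lemma wf_ty_head_tail_meet:
  assumes "wf_ty SC \<kappa>"
  shows "wf_ty SD (head_meet \<kappa>) \<and> wf_ty SC (tail_meet \<kappa>)"
proof -
  have "\<forall>\<delta>\<in>set (map fst (prods \<kappa>)). wf_ty SD \<delta>" "\<forall>\<kappa>'\<in>set (map snd (prods \<kappa>)). wf_ty SC \<kappa>'"
    using wf_ty_prods[OF assms] by auto
  then show ?thesis
    by (simp add: head_meet_def tail_meet_def wf_ty_meet)
qed

lemma sub_head_tail_meet:
  assumes "wf_ty SC \<kappa>" and "(\<delta>, \<kappa>') \<in> set (prods \<kappa>)"
  shows "sub SD (head_meet \<kappa>) \<delta> \<and> sub SC (tail_meet \<kappa>) \<kappa>'"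
proof -
  have "\<forall>\<delta>\<in>set (map fst (prods \<kappa>)). wf_ty SD \<delta>" "\<forall>\<kappa>'\<in>set (map snd (prods \<kappa>)). wf_ty SC \<kappa>'"
    using wf_ty_prods[OF assms(1)] by auto
  moreover have "\<delta> \<in> set (map fst (prods \<kappa>))" "\<kappa>' \<in> set (map snd (prods \<kappa>))"
    using assms(2) by force+
  ultimately show ?thesis
    by (simp add: head_meet_def tail_meet_def sub_meet_member)
qed

definition prod_cover :: "'a::complete_lattice ity \<Rightarrow> 'a ity \<Rightarrow> bool" where
  "prod_cover \<kappa> \<kappa>' \<longleftrightarrow>
    (\<forall>(\<delta>, \<kappa>'') \<in> set (prods \<kappa>'). sub SD (head_meet \<kappa>) \<delta> \<and> sub SC (tail_meet \<kappa>) \<kappa>'')"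

lemma prod_cover_subset:
  assumes "wf_ty SC \<kappa>" and "set (prods \<kappa>') \<subseteq> set (prods \<kappa>)"
  shows "prod_cover \<kappa> \<kappa>'"
  unfolding prod_cover_def
proof clarify
  fix \<delta> \<kappa>'' assume "(\<delta>, \<kappa>'') \<in> set (prods \<kappa>')"
  with assms show "sub SD (head_meet \<kappa>) \<delta> \<and> sub SC (tail_meet \<kappa>) \<kappa>''"
    by (intro sub_head_tail_meet) auto
qed

lemma prod_cover_head_tail_meet:
  assumes "wf_ty SC \<kappa>" and "prod_cover \<kappa> \<kappa>'"
  shows "sub SD (head_meet \<kappa>) (head_meet \<kappa>') \<and> sub SC (tail_meet \<kappa>) (tail_meet \<kappa>')"
proof -
  have "\<forall>\<delta>\<in>set (map fst (prods \<kappa>')). sub SD (head_meet \<kappa>) \<delta>"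
    and "\<forall>\<kappa>''\<in>set (map snd (prods \<kappa>')). sub SC (tail_meet \<kappa>) \<kappa>''"
    using assms(2) unfolding prod_cover_def by auto
  with wf_ty_head_tail_meet[OF assms(1)] show ?thesis
    unfolding head_meet_def[of \<kappa>'] tail_meet_def[of \<kappa>'] by (simp add: sub_meet_glb)
qed

lemma sub_prod_cover: "sub SC \<kappa> \<kappa>' \<Longrightarrow> prod_cover \<kappa> \<kappa>'"
proof (induction SC \<kappa> \<kappa>' rule: sub.induct)
  case (trans \<kappa> \<kappa>' \<kappa>'')
  then have "wf_ty SC \<kappa>" and IH: "prod_cover \<kappa> \<kappa>'" "prod_cover \<kappa>' \<kappa>''"
    using sub_wf by blast+
  then have "sub SD (head_meet \<kappa>) (head_meet \<kappa>')" "sub SC (tail_meet \<kappa>) (tail_meet \<kappa>')"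
    using prod_cover_head_tail_meet by blast+
  with IH(2) show ?case
    unfolding prod_cover_def by (blast intro: sub.trans)
next
  case (glb \<kappa> \<kappa>' \<kappa>'')
  then show ?case
    by (simp add: prod_cover_def ball_Un)
next
  case (prod_inter \<delta>1 \<delta>2 \<kappa>1 \<kappa>2)
  then have "sub SD (TInter \<delta>1 (TInter \<delta>2 TOm)) (TInter \<delta>1 \<delta>2)"
    and "sub SC (TInter \<kappa>1 (TInter \<kappa>2 TOm)) (TInter \<kappa>1 \<kappa>2)"
    by (simp_all add: sub_inter_mono sub_refl sub_interL)
  then show ?case
    by (simp add: prod_cover_def head_meet_def tail_meet_def)
next
  case (prod_mono \<delta> \<delta>' \<kappa> \<kappa>')
  then have "wf_ty SD \<delta>" "wf_ty SC \<kappa>"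
    using sub_wf by blast+
  with prod_mono show ?case
    by (simp add: prod_cover_def sub.trans[OF sub_interL])
qed (simp_all add: prod_cover_subset, simp_all add: prod_cover_def)

lemma head_tail_meet_mono:
  "sub SC \<kappa> \<kappa>' \<Longrightarrow> sub SD (head_meet \<kappa>) (head_meet \<kappa>') \<and> sub SC (tail_meet \<kappa>) (tail_meet \<kappa>')"
  using prod_cover_head_tail_meet sub_prod_cover sub_wf by blast

lemma sub_TProd_inv:
  assumes "sub SC (TProd \<delta> \<kappa>) (TProd \<delta>' \<kappa>')"
  shows "sub SD \<delta> \<delta>' \<and> sub SC \<kappa> \<kappa>'"
proof -
  have "sub SD (TInter \<delta> TOm) \<delta>'" "sub SC (TInter \<kappa> TOm) \<kappa>'"
    using sub_prod_cover[OF assms] by (simp_all add: prod_cover_def)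
  moreover have "wf_ty SD \<delta>" "wf_ty SC \<kappa>"
    using sub_wf[OF assms] by simp_all
  ultimately show ?thesis
    by (blast intro: sub.trans sub_inter_Om)
qed

section \<open>Arrow-closed properties\<close>

text \<open>\<open>P \<kappa> \<rho>\<close> is read as a property of the arrow type \<open>\<kappa> \<rightarrow> \<rho>\<close>. Properties closed under the rules
that produce arrow types propagate along \<open>\<le>\<^sub>D\<close>; the generation
lemmas for abstractions, applications and \<open>\<mu>\<close>-abstractions are instances.\<close>

definition arrow_closed :: "('a::complete_lattice ity \<Rightarrow> 'a ity \<Rightarrow> bool) \<Rightarrow> bool" where
  "arrow_closed P \<longleftrightarrow>
     (\<forall>\<kappa>. wf_ty SC \<kappa> \<longrightarrow> P \<kappa> TOm) \<and>
     (\<forall>\<kappa> \<rho>1 \<rho>2. wf_ty SC \<kappa> \<longrightarrow> wf_ty SR \<rho>1 \<longrightarrow> wf_ty SR \<rho>2 \<longrightarrow>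
        P \<kappa> \<rho>1 \<longrightarrow> P \<kappa> \<rho>2 \<longrightarrow> P \<kappa> (TInter \<rho>1 \<rho>2)) \<and>
     (\<forall>\<kappa> \<rho> \<kappa>' \<rho>'. P \<kappa> \<rho> \<longrightarrow> wf_ty SC \<kappa> \<longrightarrow> wf_ty SR \<rho> \<longrightarrow>
        sub SC \<kappa>' \<kappa> \<longrightarrow> sub SR \<rho> \<rho>' \<longrightarrow> P \<kappa>' \<rho>')"

lemma arrow_closedI:
  assumes "\<And>\<kappa>. wf_ty SC \<kappa> \<Longrightarrow> P \<kappa> TOm"
    and "\<And>\<kappa> \<rho>1 \<rho>2. wf_ty SC \<kappa> \<Longrightarrow> wf_ty SR \<rho>1 \<Longrightarrow> wf_ty SR \<rho>2 \<Longrightarrow>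
           P \<kappa> \<rho>1 \<Longrightarrow> P \<kappa> \<rho>2 \<Longrightarrow> P \<kappa> (TInter \<rho>1 \<rho>2)"
    and "\<And>\<kappa> \<rho> \<kappa>' \<rho>'. P \<kappa> \<rho> \<Longrightarrow> wf_ty SC \<kappa> \<Longrightarrow> wf_ty SR \<rho> \<Longrightarrow>
           sub SC \<kappa>' \<kappa> \<Longrightarrow> sub SR \<rho> \<rho>' \<Longrightarrow> P \<kappa>' \<rho>'"
  shows "arrow_closed P"
  using assms unfolding arrow_closed_def by blast

lemma arrow_closedD:
  assumes "arrow_closed P"
  shows arrow_closed_TOm: "wf_ty SC \<kappa> \<Longrightarrow> P \<kappa> TOm"
    and arrow_closed_TInter: "wf_ty SC \<kappa> \<Longrightarrow> wf_ty SR \<rho>1 \<Longrightarrow> wf_ty SR \<rho>2 \<Longrightarrow>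
           P \<kappa> \<rho>1 \<Longrightarrow> P \<kappa> \<rho>2 \<Longrightarrow> P \<kappa> (TInter \<rho>1 \<rho>2)"
    and arrow_closed_mono: "P \<kappa> \<rho> \<Longrightarrow> wf_ty SC \<kappa> \<Longrightarrow> wf_ty SR \<rho> \<Longrightarrow>
           sub SC \<kappa>' \<kappa> \<Longrightarrow> sub SR \<rho> \<rho>' \<Longrightarrow> P \<kappa>' \<rho>'"
  using assms unfolding arrow_closed_def by blast+

lemma arrow_closed_meet:
  assumes P: "arrow_closed P" and \<kappa>: "wf_ty SC \<kappa>"
    and l: "list_all (\<lambda>(\<kappa>', \<rho>'). wf_ty SC \<kappa>' \<and> wf_ty SR \<rho>' \<and> P \<kappa>' \<rho>' \<and> sub SC \<kappa> \<kappa>') l"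
  shows "P \<kappa> (meet (map snd l)) \<and> wf_ty SR (meet (map snd l))"
  using l
proof (induction l)
  case Nil
  then show ?case
    using arrow_closed_TOm[OF P \<kappa>] by simp
next
  case (Cons x l)
  obtain \<kappa>' \<rho>' where x: "x = (\<kappa>', \<rho>')"
    by fastforce
  with Cons.prems have "P \<kappa>' \<rho>'" "wf_ty SC \<kappa>'" "wf_ty SR \<rho>'" "sub SC \<kappa> \<kappa>'"
    by auto
  then have "P \<kappa> \<rho>'" "wf_ty SR \<rho>'"
    using arrow_closed_mono[OF P] sub_refl by blast+
  moreover have "P \<kappa> (meet (map snd l)) \<and> wf_ty SR (meet (map snd l))"
    using Cons by simp
  ultimately show ?case
    using x arrow_closed_TInter[OF P \<kappa>] by simp
qed

lemma arrow_closed_sub_TArr: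
  assumes P: "arrow_closed P" and sub: "sub SD \<sigma> (TArr \<kappa> \<rho>)"
    and arrows: "\<forall>(\<kappa>', \<rho>')\<in>set (arrows \<sigma>). P \<kappa>' \<rho>'"
  shows "P \<kappa> \<rho>"
proof -
  have wf: "wf_ty SD \<sigma>" "wf_ty SC \<kappa>" "wf_ty SR \<rho>"
    using sub_wf[OF sub] by auto
  define l where "l = filter (\<lambda>(\<kappa>', \<rho>'). sub SC \<kappa> \<kappa>') (arrows \<sigma>)"
  have l: "list_all (\<lambda>(\<kappa>', \<rho>'). wf_ty SC \<kappa>' \<and> wf_ty SR \<rho>' \<and> P \<kappa>' \<rho>' \<and> sub SC \<kappa> \<kappa>') l"
    using arrows wf_ty_arrows[OF wf(1)] unfolding l_def list_all_iff by auto
  note meet = arrow_closed_meet[OF P wf(2) l]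
  have "val \<rho> \<le> arrow_sup \<sigma> \<kappa>"
    using sub_arrow_cover[OF sub] by (simp add: arrow_cover_def)
  also have "arrow_sup \<sigma> \<kappa> = val (meet (map snd l))"
    unfolding arrow_sup_def val_meet l_def by (rule arg_cong[where f = Sup]) force
  finally have "sub SR (meet (map snd l)) \<rho>"
    using meet wf(3) by (simp add: sub_SR_if_val_le)
  then show ?thesis
    using meet wf(2) arrow_closed_mono[OF P] sub_refl by blast
qed

lemma sub_TArr_arrows: "wf_ty SD \<sigma> \<Longrightarrow> (\<kappa>, \<rho>) \<in> set (arrows \<sigma>) \<Longrightarrow> sub SD \<sigma> (TArr \<kappa> \<rho>)"
proof (induction \<sigma>)
  case (TInter \<sigma> \<tau>)
  then have "sub SD (TInter \<sigma> \<tau>) \<sigma>" "sub SD (TInter \<sigma> \<tau>) \<tau>"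
    by (simp_all add: sub_interL sub_interR)
  with TInter show ?case
    by (auto intro: sub.trans)
qed (auto simp: sub.psi_arr1 sub_refl)

lemma arrow_closed_sub:
  assumes "arrow_closed P" and "sub SD \<sigma> \<tau>" and "\<forall>(\<kappa>, \<rho>)\<in>set (arrows \<sigma>). P \<kappa> \<rho>"
  shows "\<forall>(\<kappa>, \<rho>)\<in>set (arrows \<tau>). P \<kappa> \<rho>"
proof clarify
  fix \<kappa> \<rho> assume "(\<kappa>, \<rho>) \<in> set (arrows \<tau>)"
  then have "sub SD \<tau> (TArr \<kappa> \<rho>)"
    using sub_wf[OF assms(2)] by (simp add: sub_TArr_arrows)
  with assms(2) have "sub SD \<sigma> (TArr \<kappa> \<rho>)"
    by (rule sub.trans)
  with assms(1,3) show "P \<kappa> \<rho>"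
    by (blast intro: arrow_closed_sub_TArr)
qed

lemma wf_ty_arrow_types: "wf_ty SD \<sigma> \<Longrightarrow> \<forall>\<upsilon>\<in>set (map (\<lambda>(\<kappa>, \<rho>). TArr \<kappa> \<rho>) (arrows \<sigma>)). wf_ty SD \<upsilon>"
  by (induction \<sigma>) auto

lemma sub_meet_arrows: "wf_ty SD \<sigma> \<Longrightarrow> sub SD (meet (map (\<lambda>(\<kappa>, \<rho>). TArr \<kappa> \<rho>) (arrows \<sigma>))) \<sigma>"
proof (induction \<sigma>)
  case (TPsi a)
  then have "sub SD (TInter (TArr TOm (TPsi a)) TOm) (TArr TOm (TPsi a))"
    by (simp add: sub_interL)
  with TPsi show ?case
    using sub.psi_arr2[of a] by (simp add: sub.trans)
next
  case (TInter \<sigma> \<tau>)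
  let ?arrs = "\<lambda>\<sigma>. map (\<lambda>(\<kappa>, \<rho>). TArr \<kappa> \<rho>) (arrows \<sigma>)"
  have wf: "\<forall>\<upsilon>\<in>set (?arrs (TInter \<sigma> \<tau>)). wf_ty SD \<upsilon>"
    using TInter.prems by (rule wf_ty_arrow_types)
  have "sub SD (meet (?arrs (TInter \<sigma> \<tau>))) (meet (?arrs \<sigma>))"
    and "sub SD (meet (?arrs (TInter \<sigma> \<tau>))) (meet (?arrs \<tau>))"
    using sub_meet_subset[OF wf] by auto
  moreover have "sub SD (meet (?arrs \<sigma>)) \<sigma>" "sub SD (meet (?arrs \<tau>)) \<tau>"
    using TInter by simp_all
  ultimately show ?case
    using sub.glb sub.trans by blast
next
  case (TArr \<kappa> \<rho>)
  then show ?case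
    by (simp add: sub_interL)
qed simp_all

definition wf_basis :: "(nat \<Rightarrow> 'a::complete_lattice ity) \<Rightarrow> bool" where
  "wf_basis G \<longleftrightarrow> (\<forall>x. wf_ty SD (G x))"

definition wf_ctxt :: "(nat \<Rightarrow> 'a::complete_lattice ity) \<Rightarrow> bool" where
  "wf_ctxt D \<longleftrightarrow> (\<forall>a. wf_ty SC (D a))"

lemma extend_simps [simp]: "extend d G 0 = d" "extend d G (Suc j) = G j"
  by (simp_all add: extend_def)

lemma wf_basis_extend: "wf_basis G \<Longrightarrow> wf_ty SD \<delta> \<Longrightarrow> wf_basis (extend \<delta> G)"
  unfolding wf_basis_def extend_def by (simp split: nat.split)

lemma wf_ctxt_extend: "wf_ctxt D \<Longrightarrow> wf_ty SC \<kappa> \<Longrightarrow> wf_ctxt (extend \<kappa> D)"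
  unfolding wf_ctxt_def extend_def by (simp split: nat.split)

lemmas typing_intros = has_type_cmd_type.intros[simplified]

lemmas has_type_induct[consumes 1, case_names Ax Abs App Mu Inter Om Sub] =
  has_type_cmd_type.inducts(1)[where ?P2.0 = "\<lambda>_ _ _ _. True", simplified]

lemmas cmd_type_induct[consumes 1, case_names Cmd CInter COm CSub] =
  has_type_cmd_type.inducts(2)[where ?P1.0 = "\<lambda>_ _ _ _. True", simplified]

lemma has_type_wf:
  "has_type G M \<sigma> D \<Longrightarrow> wf_basis G \<Longrightarrow> wf_ctxt D \<Longrightarrow> wf_ty SD \<sigma>"
  "cmd_type G C \<kappa> D \<Longrightarrow> wf_basis G \<Longrightarrow> wf_ctxt D \<Longrightarrow> wf_ty SC \<kappa>"
proof (induction rule: has_type_cmd_type.inducts)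
  case (Abs \<delta> G M \<kappa> \<rho> D)
  then show ?case
    using wf_basis_extend by fastforce
next
  case (Mu G C \<kappa>' \<rho> \<kappa> D)
  then show ?case
    using wf_ctxt_extend by fastforce
qed (auto simp: wf_basis_def wf_ctxt_def dest: sub_wf)

definition basis_le :: "(nat \<Rightarrow> 'a::complete_lattice ity) \<Rightarrow> (nat \<Rightarrow> 'a ity) \<Rightarrow> bool" where
  "basis_le G' G \<longleftrightarrow> (\<forall>x. sub SD (G' x) (G x))"

definition ctxt_le :: "(nat \<Rightarrow> 'a::complete_lattice ity) \<Rightarrow> (nat \<Rightarrow> 'a ity) \<Rightarrow> bool" where
  "ctxt_le D' D \<longleftrightarrow> (\<forall>a. sub SC (D' a) (D a))"

lemma basis_le_refl: "wf_basis G \<Longrightarrow> basis_le G G"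
  by (simp add: basis_le_def wf_basis_def sub_refl)

lemma ctxt_le_refl: "wf_ctxt D \<Longrightarrow> ctxt_le D D"
  by (simp add: ctxt_le_def wf_ctxt_def sub_refl)

lemma basis_le_extend: "basis_le G' G \<Longrightarrow> sub SD \<delta>' \<delta> \<Longrightarrow> basis_le (extend \<delta>' G') (extend \<delta> G)"
  unfolding basis_le_def extend_def by (simp split: nat.split)

lemma ctxt_le_extend: "ctxt_le D' D \<Longrightarrow> sub SC \<kappa>' \<kappa> \<Longrightarrow> ctxt_le (extend \<kappa>' D') (extend \<kappa> D)"
  unfolding ctxt_le_def extend_def by (simp split: nat.split)

lemma ctxt_le_upd: "wf_ctxt D \<Longrightarrow> sub SC \<kappa>' \<kappa> \<Longrightarrow> ctxt_le (D(a := \<kappa>')) (D(a := \<kappa>))"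
  by (simp add: ctxt_le_def wf_ctxt_def sub_refl)

lemma has_type_env_le:
  "has_type G M \<sigma> D \<Longrightarrow> basis_le G' G \<Longrightarrow> ctxt_le D' D \<Longrightarrow> has_type G' M \<sigma> D'"
  "cmd_type G C \<kappa> D \<Longrightarrow> basis_le G' G \<Longrightarrow> ctxt_le D' D \<Longrightarrow> cmd_type G' C \<kappa> D'"
proof (induction arbitrary: G' D' and G' D' rule: has_type_cmd_type.inducts)
  case (Ax G x D)
  then show ?case
    unfolding basis_le_def by (metis has_type_cmd_type.Ax has_type_cmd_type.Sub)
next
  case (Abs \<delta> G M \<kappa> \<rho> D)
  then show ?case
    by (simp add: basis_le_extend sub_refl has_type_cmd_type.Abs)
next
  case (Cmd G M \<delta> D a)
  then have "wf_basis G" "wf_ctxt D"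
    unfolding basis_le_def ctxt_le_def wf_basis_def wf_ctxt_def by (blast dest: sub_wf)+
  then have "wf_ty SD \<delta>"
    using Cmd.hyps has_type_wf(1) by blast
  moreover have "sub SC (D' a) (D a)"
    using Cmd.prems(2) by (simp add: ctxt_le_def)
  ultimately have "sub SC (TProd \<delta> (D' a)) (TProd \<delta> (D a))"
    by (simp add: sub_refl sub.prod_mono)
  with Cmd show ?case
    by (blast intro: has_type_cmd_type.Cmd has_type_cmd_type.CSub)
next
  case (Mu G C \<kappa>' \<rho> \<kappa> D)
  then have "cmd_type G' C (TProd (TArr \<kappa>' \<rho>) \<kappa>') (extend \<kappa> D')"
    by (simp add: ctxt_le_extend sub_refl)
  with Mu show ?case
    by (simp add: typing_intros)
next
  case (App G M \<delta> \<kappa> \<rho> D N)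
  then show ?case
    by (blast intro: has_type_cmd_type.App)
qed (auto intro: typing_intros)

lemma has_type_meet_arrows:
  assumes "wf_ty SD \<sigma>" and "\<And>\<kappa> \<rho>. (\<kappa>, \<rho>) \<in> set (arrows \<sigma>) \<Longrightarrow> has_type G M (TArr \<kappa> \<rho>) D"
  shows "has_type G M \<sigma> D"
proof -
  have meet: "has_type G M (meet l) D" if "\<forall>\<tau>\<in>set l. has_type G M \<tau> D" for l
    using that by (induction l) (auto intro: has_type_cmd_type.Om has_type_cmd_type.Inter)
  have "has_type G M (meet (map (\<lambda>(\<kappa>, \<rho>). TArr \<kappa> \<rho>) (arrows \<sigma>))) D"
    using assms(2) by (intro meet) auto
  then show ?thesis
    using sub_meet_arrows[OF assms(1)] by (rule has_type_cmd_type.Sub)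
qed

lemma has_type_arrows:
  "has_type G M \<sigma> D \<Longrightarrow> wf_basis G \<Longrightarrow> wf_ctxt D \<Longrightarrow> (\<kappa>, \<rho>) \<in> set (arrows \<sigma>) \<Longrightarrow>
    has_type G M (TArr \<kappa> \<rho>) D"
  using has_type_wf(1) sub_TArr_arrows has_type_cmd_type.Sub by blast

lemma has_type_transfer_arrows:
  assumes "has_type G M \<sigma> D" and "wf_basis G" and "wf_ctxt D"
    and "\<And>\<kappa> \<rho>. has_type G M (TArr \<kappa> \<rho>) D \<Longrightarrow> has_type G' M' (TArr \<kappa> \<rho>) D'"
  shows "has_type G' M' \<sigma> D'"
  using has_type_wf(1)[OF assms(1-3)]
proof (rule has_type_meet_arrows)
  fix \<kappa> \<rho> assume "(\<kappa>, \<rho>) \<in> set (arrows \<sigma>)"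
  with assms(1-3) show "has_type G' M' (TArr \<kappa> \<rho>) D'"
    by (intro assms(4) has_type_arrows)
qed

section \<open>Weakening, strengthening and substitution\<close>

definition insert_at :: "nat \<Rightarrow> 'b \<Rightarrow> (nat \<Rightarrow> 'b) \<Rightarrow> nat \<Rightarrow> 'b" where
  "insert_at k d G = (\<lambda>i. if i < k then G i else if i = k then d else G (i - 1))"

lemma extend_eq_insert_at_0: "extend d G = insert_at 0 d G"
  by (rule ext) (simp add: extend_def insert_at_def split: nat.split)

lemma extend_insert_at: "extend e (insert_at k d G) = insert_at (Suc k) d (extend e G)"
  by (rule ext) (simp add: extend_def insert_at_def split: nat.split)

lemma has_type_Var: "G x = \<sigma> \<Longrightarrow> has_type G (Var x) \<sigma> D"
  using has_type_cmd_type.Ax by blast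

lemma cmd_type_Cmd: "D a = \<kappa> \<Longrightarrow> has_type G M \<delta> D \<Longrightarrow> cmd_type G (Cmd a M) (TProd \<delta> \<kappa>) D"
  using has_type_cmd_type.Cmd by blast

lemma has_type_liftV:
  "has_type G M \<sigma> D \<Longrightarrow> has_type (insert_at k \<theta> G) (liftV k M) \<sigma> D"
  "cmd_type G C \<kappa> D \<Longrightarrow> cmd_type (insert_at k \<theta> G) (liftVc k C) \<kappa> D"
proof (induction arbitrary: k and k rule: has_type_cmd_type.inducts)
  case (Ax G x D)
  then show ?case
    by (auto intro: has_type_Var simp: insert_at_def)
next
  case (Abs \<delta> G M \<kappa> \<rho> D)
  then have "has_type (extend \<delta> (insert_at k \<theta> G)) (liftV (Suc k) M) (TArr \<kappa> \<rho>) D"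
    by (simp add: extend_insert_at)
  with Abs show ?case
    by (simp add: has_type_cmd_type.Abs)
qed (auto intro: typing_intros)

lemma has_type_liftN:
  "has_type G M \<sigma> D \<Longrightarrow> has_type G (liftN k M) \<sigma> (insert_at k \<theta> D)"
  "cmd_type G C \<kappa> D \<Longrightarrow> cmd_type G (liftNc k C) \<kappa> (insert_at k \<theta> D)"
proof (induction arbitrary: k and k rule: has_type_cmd_type.inducts)
  case (Cmd G M \<delta> D a)
  then show ?case
    by (auto intro: cmd_type_Cmd simp: insert_at_def)
next
  case (Mu G C \<kappa>' \<rho> \<kappa> D)
  then have "cmd_type G (liftNc (Suc k) C) (TProd (TArr \<kappa>' \<rho>) \<kappa>') (extend \<kappa> (insert_at k \<theta> D))"
    by (simp add: extend_insert_at)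
  with Mu show ?case
    by (simp add: typing_intros)
qed (auto intro: typing_intros)

lemma eq_liftV_iff:
  "Cmd a T = liftVc k C \<longleftrightarrow> (\<exists>M. C = Cmd a M \<and> T = liftV k M)"
  "Var x = liftV k M \<longleftrightarrow> (\<exists>y. M = Var y \<and> x = (if y < k then y else Suc y))"
  "Lam T = liftV k M \<longleftrightarrow> (\<exists>M'. M = Lam M' \<and> T = liftV (Suc k) M')"
  "App T U = liftV k M \<longleftrightarrow> (\<exists>M1 M2. M = App M1 M2 \<and> T = liftV k M1 \<and> U = liftV k M2)"
  "Mu C' = liftV k M \<longleftrightarrow> (\<exists>C. M = Mu C \<and> C' = liftVc k C)"
  by (cases C; auto) (cases M; auto)+

lemma eq_liftN_iff:
  "Cmd a T = liftNc k C \<longleftrightarrow> (\<exists>b M. C = Cmd b M \<and> a = (if b < k then b else Suc b) \<and> T = liftN k M)"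
  "Var x = liftN k M \<longleftrightarrow> M = Var x"
  "Lam T = liftN k M \<longleftrightarrow> (\<exists>M'. M = Lam M' \<and> T = liftN k M')"
  "App T U = liftN k M \<longleftrightarrow> (\<exists>M1 M2. M = App M1 M2 \<and> T = liftN k M1 \<and> U = liftN k M2)"
  "Mu C' = liftN k M \<longleftrightarrow> (\<exists>C. M = Mu C \<and> C' = liftNc (Suc k) C)"
  by (cases C; auto) (cases M; auto)+

lemma has_type_unliftV:
  "has_type G' T \<sigma> D \<Longrightarrow> G' = insert_at k \<theta> G \<Longrightarrow> T = liftV k M \<Longrightarrow> has_type G M \<sigma> D"
  "cmd_type G' C' \<kappa> D \<Longrightarrow> G' = insert_at k \<theta> G \<Longrightarrow> C' = liftVc k C \<Longrightarrow> cmd_type G C \<kappa> D"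
proof (induction arbitrary: G k M and G k C rule: has_type_cmd_type.inducts)
  case (Ax G' x D)
  then show ?case
    by (auto intro: has_type_Var simp: eq_liftV_iff insert_at_def split: if_splits)
next
  case (Abs \<delta> G' T \<kappa> \<rho> D)
  then obtain M' where "M = Lam M'" "T = liftV (Suc k) M'"
    by (auto simp: eq_liftV_iff)
  moreover have "extend \<delta> G' = insert_at (Suc k) \<theta> (extend \<delta> G)"
    using Abs.prems by (simp add: extend_insert_at)
  ultimately show ?case
    using Abs by (auto intro: typing_intros)
next
  case (App G' T \<delta> \<kappa> \<rho> D U)
  then obtain M1 M2 where "M = App M1 M2" "T = liftV k M1" "U = liftV k M2"
    by (auto simp: eq_liftV_iff)
  with App.IH[where G = G and k = k] App.prems show ?case
    by (auto intro: typing_intros)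
next
  case (Cmd G' T \<delta> D a)
  then obtain M where "C = Cmd a M" "T = liftV k M"
    by (auto simp: eq_liftV_iff)
  with Cmd.IH[where G = G and k = k] Cmd.prems show ?case
    by (auto intro: typing_intros)
next
  case (Mu G' C' \<kappa>' \<rho> \<kappa> D)
  then obtain C where "M = Mu C" "C' = liftVc k C"
    by (auto simp: eq_liftV_iff)
  with Mu.IH[where G = G and k = k] Mu.prems Mu.hyps show ?case
    by (auto intro: typing_intros)
qed (auto intro: typing_intros)

lemma has_type_unliftN:
  "has_type G T \<sigma> D' \<Longrightarrow> D' = insert_at k \<theta> D \<Longrightarrow> T = liftN k M \<Longrightarrow> has_type G M \<sigma> D"
  "cmd_type G C' \<kappa> D' \<Longrightarrow> D' = insert_at k \<theta> D \<Longrightarrow> C' = liftNc k C \<Longrightarrow> cmd_type G C \<kappa> D"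
proof (induction arbitrary: D k M and D k C rule: has_type_cmd_type.inducts)
  case (Abs \<delta> G T \<kappa> \<rho> D')
  then obtain M' where "M = Lam M'" "T = liftN k M'"
    by (auto simp: eq_liftN_iff)
  with Abs.IH[where D = D and k = k] Abs.prems Abs.hyps show ?case
    by (auto intro: typing_intros)
next
  case (App G T \<delta> \<kappa> \<rho> D' U)
  then obtain M1 M2 where "M = App M1 M2" "T = liftN k M1" "U = liftN k M2"
    by (auto simp: eq_liftN_iff)
  with App.IH[where D = D and k = k] App.prems show ?case
    by (auto intro: typing_intros)
next
  case (Cmd G T \<delta> D' a)
  then obtain b M where "C = Cmd b M" "a = (if b < k then b else Suc b)" "T = liftN k M"
    by (auto simp: eq_liftN_iff)
  moreover from this Cmd.prems have "D' a = D b"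
    by (simp add: insert_at_def)
  ultimately show ?case
    using Cmd.IH[where D = D and k = k and M = M] Cmd.prems by (auto intro: cmd_type_Cmd)
next
  case (Mu G C' \<kappa>' \<rho> \<kappa> D')
  then obtain C where "M = Mu C" "C' = liftNc (Suc k) C"
    by (auto simp: eq_liftN_iff)
  moreover have "extend \<kappa> D' = insert_at (Suc k) \<theta> (extend \<kappa> D)"
    using Mu.prems by (simp add: extend_insert_at)
  ultimately show ?case
    using Mu.IH[where D = "extend \<kappa> D" and k = "Suc k" and C = C] Mu.hyps by (auto intro: typing_intros)
qed (auto simp: eq_liftN_iff intro: typing_intros)

lemma has_type_substV:
  "has_type G' M \<sigma> D \<Longrightarrow> G' = insert_at k \<delta> G \<Longrightarrow> has_type G N \<delta> D \<Longrightarrow>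
    has_type G (substV M k N) \<sigma> D"
  "cmd_type G' C \<kappa> D \<Longrightarrow> G' = insert_at k \<delta> G \<Longrightarrow> has_type G N \<delta> D \<Longrightarrow>
    cmd_type G (substVc C k N) \<kappa> D"
proof (induction arbitrary: G k N and G k N rule: has_type_cmd_type.inducts)
  case (Ax G' x D)
  then show ?case
    by (auto intro: has_type_Var simp: insert_at_def)
next
  case (Abs \<delta>' G' M \<kappa> \<rho> D)
  have "has_type (extend \<delta>' G) (liftV 0 N) \<delta> D"
    using has_type_liftV(1)[OF Abs.prems(2)] by (simp add: extend_eq_insert_at_0)
  moreover have "extend \<delta>' G' = insert_at (Suc k) \<delta> (extend \<delta>' G)"
    using Abs.prems(1) by (simp add: extend_insert_at)
  ultimately show ?case
    using Abs by (auto intro: typing_intros)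
next
  case (Mu G' C \<kappa>' \<rho> \<kappa> D)
  have "has_type G (liftN 0 N) \<delta> (extend \<kappa> D)"
    using has_type_liftN(1)[OF Mu.prems(2)] by (simp add: extend_eq_insert_at_0)
  with Mu.IH[where k = k and G = G and N = "liftN 0 N"] Mu.prems Mu.hyps show ?case
    by (auto intro: typing_intros)
next
  case (App G' M \<delta>' \<kappa> \<rho> D U)
  then have "has_type G (substV M k N) (TArr (TProd \<delta>' \<kappa>) \<rho>) D" "has_type G (substV U k N) \<delta>' D"
    by blast+
  then show ?case
    by (simp add: typing_intros)
qed (auto intro: typing_intros)

lemma basis_le_insert_at:
  "wf_basis G \<Longrightarrow> sub SD \<delta>' \<delta> \<Longrightarrow> basis_le (insert_at k \<delta>' G) (insert_at k \<delta> G)"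
  by (simp add: basis_le_def wf_basis_def insert_at_def sub_refl)

lemma typing_insert_at_TInter:
  assumes "wf_basis G" "wf_ctxt D" "wf_ty SD \<delta>1" "wf_ty SD \<delta>2"
  shows "has_type (insert_at k \<delta>1 G) M \<sigma> D \<Longrightarrow> has_type (insert_at k (TInter \<delta>1 \<delta>2) G) M \<sigma> D"
    and "has_type (insert_at k \<delta>2 G) M \<sigma> D \<Longrightarrow> has_type (insert_at k (TInter \<delta>1 \<delta>2) G) M \<sigma> D"
    and "cmd_type (insert_at k \<delta>1 G) C \<kappa> D \<Longrightarrow> cmd_type (insert_at k (TInter \<delta>1 \<delta>2) G) C \<kappa> D"
    and "cmd_type (insert_at k \<delta>2 G) C \<kappa> D \<Longrightarrow> cmd_type (insert_at k (TInter \<delta>1 \<delta>2) G) C \<kappa> D"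
proof -
  have "basis_le (insert_at k (TInter \<delta>1 \<delta>2) G) (insert_at k \<delta>1 G)"
    and "basis_le (insert_at k (TInter \<delta>1 \<delta>2) G) (insert_at k \<delta>2 G)"
    using assms by (simp_all add: basis_le_insert_at sub_interL sub_interR)
  with ctxt_le_refl[OF assms(2)] show
    "has_type (insert_at k \<delta>1 G) M \<sigma> D \<Longrightarrow> has_type (insert_at k (TInter \<delta>1 \<delta>2) G) M \<sigma> D"
    "has_type (insert_at k \<delta>2 G) M \<sigma> D \<Longrightarrow> has_type (insert_at k (TInter \<delta>1 \<delta>2) G) M \<sigma> D"
    "cmd_type (insert_at k \<delta>1 G) C \<kappa> D \<Longrightarrow> cmd_type (insert_at k (TInter \<delta>1 \<delta>2) G) C \<kappa> D"
    "cmd_type (insert_at k \<delta>2 G) C \<kappa> D \<Longrightarrow> cmd_type (insert_at k (TInter \<delta>1 \<delta>2) G) C \<kappa> D"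
    by (blast intro: has_type_env_le)+
qed

lemma eq_substV_cases:
  "Cmd a T = substVc C k N \<Longrightarrow> \<exists>M. C = Cmd a M \<and> T = substV M k N"
  "Var x = substV M k N \<Longrightarrow> \<exists>i. M = Var i"
  "Lam T = substV M k N \<Longrightarrow> (\<exists>i. M = Var i) \<or> (\<exists>M'. M = Lam M' \<and> T = substV M' (Suc k) (liftV 0 N))"
  "App T U = substV M k N \<Longrightarrow>
    (\<exists>i. M = Var i) \<or> (\<exists>M1 M2. M = App M1 M2 \<and> T = substV M1 k N \<and> U = substV M2 k N)"
  "Mu C' = substV M k N \<Longrightarrow> (\<exists>i. M = Var i) \<or> (\<exists>C. M = Mu C \<and> C' = substVc C k (liftN 0 N))"
  by (cases C; auto) (cases M; auto)+

text \<open>Subject expansion for substitution: the argument is typed with the type of the variable;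
occurrences of other variables, or none at all, need only \<open>\<omega>\<close>.\<close>

lemma has_type_substV_Var_expand:
  assumes "has_type G (substV (Var i) k N) \<sigma> D" and "wf_basis G" and "wf_ctxt D"
  shows "\<exists>\<delta>. wf_ty SD \<delta> \<and> has_type G N \<delta> D \<and> has_type (insert_at k \<delta> G) (Var i) \<sigma> D"
proof (cases "i = k")
  case True
  with assms show ?thesis
    by (intro exI[of _ \<sigma>]) (auto intro: has_type_Var has_type_wf simp: insert_at_def)
next
  case False
  define j where "j = (if i < k then i else i - 1)"
  have "has_type G (Var j) \<sigma> D"
    using assms(1) False by (simp add: j_def split: if_split_asm)
  then have "has_type (insert_at k TOm G) (liftV k (Var j)) \<sigma> D"
    by (rule has_type_liftV)
  moreover have "liftV k (Var j) = Var i"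
    using False by (auto simp: j_def)
  ultimately show ?thesis
    by (intro exI[of _ TOm]) (simp add: has_type_cmd_type.Om)
qed

lemma has_type_substV_expand:
  "has_type G T \<sigma> D \<Longrightarrow> T = substV M k N \<Longrightarrow> wf_basis G \<Longrightarrow> wf_ctxt D \<Longrightarrow>
    \<exists>\<delta>. wf_ty SD \<delta> \<and> has_type G N \<delta> D \<and> has_type (insert_at k \<delta> G) M \<sigma> D"
  "cmd_type G C' \<kappa> D \<Longrightarrow> C' = substVc C k N \<Longrightarrow> wf_basis G \<Longrightarrow> wf_ctxt D \<Longrightarrow>
    \<exists>\<delta>. wf_ty SD \<delta> \<and> has_type G N \<delta> D \<and> cmd_type (insert_at k \<delta> G) C \<kappa> D"
proof (induction arbitrary: M k N and C k N rule: has_type_cmd_type.inducts)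
  case (Ax G x D)
  then obtain i where "M = Var i"
    using eq_substV_cases(2) by blast
  moreover have "has_type G (substV M k N) (G x) D"
    using Ax.prems(1) by (metis typing_intros(1))
  ultimately show ?case
    using has_type_substV_Var_expand Ax.prems(2,3) by blast
next
  case (Abs \<delta>' G T \<kappa> \<rho> D)
  have ty: "has_type G (substV M k N) (TArr (TProd \<delta>' \<kappa>) \<rho>) D"
    using Abs.hyps by (simp add: Abs.prems(1)[symmetric] typing_intros)
  from eq_substV_cases(3)[OF Abs.prems(1)] show ?case
  proof (elim disjE exE conjE)
    fix i assume "M = Var i"
    with ty Abs.prems(2,3) show ?thesis
      using has_type_substV_Var_expand by blast
  next
    fix M' assume M: "M = Lam M'" "T = substV M' (Suc k) (liftV 0 N)"
    have "wf_basis (extend \<delta>' G)"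
      using Abs.prems(2) Abs.hyps(2) by (simp add: wf_basis_extend)
    with M obtain \<delta> where \<delta>: "wf_ty SD \<delta>" "has_type (extend \<delta>' G) (liftV 0 N) \<delta> D"
        "has_type (insert_at (Suc k) \<delta> (extend \<delta>' G)) M' (TArr \<kappa> \<rho>) D"
      using Abs.IH[where M = M' and k = "Suc k" and N = "liftV 0 N"] Abs.prems(3) by blast
    have "has_type G N \<delta> D"
      using has_type_unliftV(1)[OF \<delta>(2) extend_eq_insert_at_0] by simp
    moreover have "has_type (insert_at k \<delta> G) M (TArr (TProd \<delta>' \<kappa>) \<rho>) D"
      using \<delta>(3) Abs.hyps(2) M by (simp add: extend_insert_at[symmetric] typing_intros)
    ultimately show ?thesis
      using \<delta>(1) by blast
  qed
next
  case (App G T \<delta>' \<kappa> \<rho> D U)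
  have ty: "has_type G (substV M k N) (TArr \<kappa> \<rho>) D"
    using App.hyps by (simp add: App.prems(1)[symmetric] typing_intros)
  from eq_substV_cases(4)[OF App.prems(1)] show ?case
  proof (elim disjE exE conjE)
    fix i assume "M = Var i"
    with ty App.prems(2,3) show ?thesis
      using has_type_substV_Var_expand by blast
  next
    fix M1 M2 assume M: "M = App M1 M2" "T = substV M1 k N" "U = substV M2 k N"
    with App.IH(1)[where M = M1 and k = k and N = N] App.IH(2)[where M = M2 and k = k and N = N] App.prems(2,3)
    obtain \<delta>1 \<delta>2 where
      \<delta>1: "wf_ty SD \<delta>1" "has_type G N \<delta>1 D" "has_type (insert_at k \<delta>1 G) M1 (TArr (TProd \<delta>' \<kappa>) \<rho>) D" and
      \<delta>2: "wf_ty SD \<delta>2" "has_type G N \<delta>2 D" "has_type (insert_at k \<delta>2 G) M2 \<delta>' D"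
      by meson
    note widen = typing_insert_at_TInter[OF App.prems(2,3) \<delta>1(1) \<delta>2(1)]
    have "has_type (insert_at k (TInter \<delta>1 \<delta>2) G) M (TArr \<kappa> \<rho>) D"
      using widen(1)[OF \<delta>1(3)] widen(2)[OF \<delta>2(3)] M by (simp add: typing_intros)
    with \<delta>1 \<delta>2 show ?thesis
      by (intro exI[of _ "TInter \<delta>1 \<delta>2"]) (simp add: typing_intros)
  qed
next
  case (Cmd G T \<delta>' D a)
  then obtain M where "C = Cmd a M" "T = substV M k N"
    using eq_substV_cases(1) by blast
  with Cmd.IH[where M = M and k = k and N = N] Cmd.prems(2,3) show ?case
    by (meson typing_intros(4))
next
  case (Mu G C' \<kappa>' \<rho> \<kappa> D)
  have ty: "has_type G (substV M k N) (TArr \<kappa> \<rho>) D"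
    using Mu.hyps by (simp add: Mu.prems(1)[symmetric] typing_intros)
  from eq_substV_cases(5)[OF Mu.prems(1)] show ?case
  proof (elim disjE exE conjE)
    fix i assume "M = Var i"
    with ty Mu.prems(2,3) show ?thesis
      using has_type_substV_Var_expand by blast
  next
    fix C assume M: "M = Mu C" "C' = substVc C k (liftN 0 N)"
    have "wf_ctxt (extend \<kappa> D)"
      using Mu.prems(3) Mu.hyps(2) by (simp add: wf_ctxt_extend)
    with M obtain \<delta> where \<delta>: "wf_ty SD \<delta>" "has_type G (liftN 0 N) \<delta> (extend \<kappa> D)"
        "cmd_type (insert_at k \<delta> G) C (TProd (TArr \<kappa>' \<rho>) \<kappa>') (extend \<kappa> D)"
      using Mu.IH[where C = C and k = k and N = "liftN 0 N"] Mu.prems(2) by blast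
    have "has_type G N \<delta> D"
      using has_type_unliftN(1)[OF \<delta>(2) extend_eq_insert_at_0] by simp
    with \<delta> Mu.hyps(2) M show ?thesis
      by (auto intro: typing_intros)
  qed
next
  case (Inter G T \<sigma> D \<tau>)
  with Inter.IH(1)[where M = M and k = k and N = N] Inter.IH(2)[where M = M and k = k and N = N]
  obtain \<delta>1 \<delta>2 where
    \<delta>1: "wf_ty SD \<delta>1" "has_type G N \<delta>1 D" "has_type (insert_at k \<delta>1 G) M \<sigma> D" and
    \<delta>2: "wf_ty SD \<delta>2" "has_type G N \<delta>2 D" "has_type (insert_at k \<delta>2 G) M \<tau> D"
    by meson
  then have "has_type (insert_at k (TInter \<delta>1 \<delta>2) G) M (TInter \<sigma> \<tau>) D"
    using typing_insert_at_TInter[OF Inter.prems(2,3) \<delta>1(1) \<delta>2(1)] by (auto intro: typing_intros)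
  with \<delta>1 \<delta>2 show ?case
    by (intro exI[of _ "TInter \<delta>1 \<delta>2"]) (simp add: typing_intros)
next
  case (CInter G C' \<sigma> D \<tau>)
  with CInter.IH(1)[where C = C and k = k and N = N] CInter.IH(2)[where C = C and k = k and N = N]
  obtain \<delta>1 \<delta>2 where
    \<delta>1: "wf_ty SD \<delta>1" "has_type G N \<delta>1 D" "cmd_type (insert_at k \<delta>1 G) C \<sigma> D" and
    \<delta>2: "wf_ty SD \<delta>2" "has_type G N \<delta>2 D" "cmd_type (insert_at k \<delta>2 G) C \<tau> D"
    by meson
  then have "cmd_type (insert_at k (TInter \<delta>1 \<delta>2) G) C (TInter \<sigma> \<tau>) D"
    using typing_insert_at_TInter[OF CInter.prems(2,3) \<delta>1(1) \<delta>2(1)] by (auto intro: typing_intros)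
  with \<delta>1 \<delta>2 show ?case
    by (intro exI[of _ "TInter \<delta>1 \<delta>2"]) (simp add: typing_intros)
next
  case (Sub G T \<sigma> D \<tau>)
  with Sub.IH[where M = M and k = k and N = N] show ?case
    by (meson typing_intros(8))
next
  case (CSub G C' \<sigma> D \<tau>)
  with CSub.IH[where C = C and k = k and N = N] show ?case
    by (meson typing_intros(11))
qed (auto intro!: exI[of _ TOm] typing_intros)

definition ren_idx :: "nat \<Rightarrow> nat \<Rightarrow> nat \<Rightarrow> nat" where
  "ren_idx k a b = (if b < k then b else if b = k then a else b - 1)"

lemma renNc_Cmd: "renNc (Cmd b M) k a = Cmd (ren_idx k a b) (renN M k a)"
  by (simp add: ren_idx_def)

lemma insert_at_ren_idx: "insert_at k (D a) D b = D (ren_idx k a b)"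
  by (simp add: insert_at_def ren_idx_def)

lemma extend_insert_at_ren:
  "extend \<kappa> (insert_at k (D a) D) = insert_at (Suc k) (extend \<kappa> D (Suc a)) (extend \<kappa> D)"
  by (simp add: extend_insert_at)

lemma has_type_renN:
  "has_type G M \<sigma> D' \<Longrightarrow> D' = insert_at k (D a) D \<Longrightarrow> has_type G (renN M k a) \<sigma> D"
  "cmd_type G C \<kappa> D' \<Longrightarrow> D' = insert_at k (D a) D \<Longrightarrow> cmd_type G (renNc C k a) \<kappa> D"
proof (induction arbitrary: D k a and D k a rule: has_type_cmd_type.inducts)
  case (Cmd G M \<delta> D' b)
  then show ?case
    by (simp only: renNc_Cmd) (auto intro: cmd_type_Cmd simp: insert_at_ren_idx)
next
  case (Mu G C \<kappa>' \<rho> \<kappa> D')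
  then have "cmd_type G (renNc C (Suc k) (Suc a)) (TProd (TArr \<kappa>' \<rho>) \<kappa>') (extend \<kappa> D)"
    by (simp add: extend_insert_at_ren)
  with Mu.hyps show ?case
    by (simp add: typing_intros)
next
  case (App G M \<delta> \<kappa> \<rho> D' N)
  then have "has_type G (renN M k a) (TArr (TProd \<delta> \<kappa>) \<rho>) D" "has_type G (renN N k a) \<delta> D"
    by blast+
  then show ?case
    by (simp add: typing_intros)
qed (auto intro: typing_intros)

lemma eq_renN_iff:
  "Cmd b T = renNc C k a \<longleftrightarrow> (\<exists>b' M. C = Cmd b' M \<and> b = ren_idx k a b' \<and> T = renN M k a)"
  "Var x = renN M k a \<longleftrightarrow> M = Var x"
  "Lam T = renN M k a \<longleftrightarrow> (\<exists>M'. M = Lam M' \<and> T = renN M' k a)"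
  "App T U = renN M k a \<longleftrightarrow> (\<exists>M1 M2. M = App M1 M2 \<and> T = renN M1 k a \<and> U = renN M2 k a)"
  "Mu C' = renN M k a \<longleftrightarrow> (\<exists>C. M = Mu C \<and> C' = renNc C (Suc k) (Suc a))"
  by (cases C; auto simp: ren_idx_def) (cases M; auto)+

lemma has_type_renN_expand:
  "has_type G T \<sigma> D \<Longrightarrow> T = renN M k a \<Longrightarrow> has_type G M \<sigma> (insert_at k (D a) D)"
  "cmd_type G C' \<kappa> D \<Longrightarrow> C' = renNc C k a \<Longrightarrow> cmd_type G C \<kappa> (insert_at k (D a) D)"
proof (induction arbitrary: M k a and C k a rule: has_type_cmd_type.inducts)
  case (Abs \<delta> G T \<kappa> \<rho> D)
  then obtain M' where "M = Lam M'" "T = renN M' k a"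
    by (auto simp: eq_renN_iff)
  with Abs.IH[where M = M' and k = k and a = a] Abs.hyps show ?case
    by (simp add: typing_intros)
next
  case (App G T \<delta> \<kappa> \<rho> D U)
  then obtain M1 M2 where "M = App M1 M2" "T = renN M1 k a" "U = renN M2 k a"
    by (auto simp: eq_renN_iff)
  with App.IH(1)[where M = M1 and k = k and a = a] App.IH(2)[where M = M2 and k = k and a = a]
  show ?case
    by (simp add: typing_intros)
next
  case (Cmd G T \<delta> D b)
  then obtain b' M where "C = Cmd b' M" "b = ren_idx k a b'" "T = renN M k a"
    by (auto simp: eq_renN_iff)
  with Cmd.IH[where M = M and k = k and a = a] show ?case
    by (auto intro: cmd_type_Cmd simp: insert_at_ren_idx)
next
  case (Mu G C' \<kappa>' \<rho> \<kappa> D)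
  then obtain C0 where "M = Mu C0" "C' = renNc C0 (Suc k) (Suc a)"
    by (auto simp: eq_renN_iff)
  with Mu.IH[where C = C0 and k = "Suc k" and a = "Suc a"] Mu.hyps show ?case
    by (simp add: extend_insert_at_ren typing_intros)
next
  case (Inter G T \<sigma> D \<tau>)
  with Inter.IH(1)[where M = M and k = k and a = a] Inter.IH(2)[where M = M and k = k and a = a]
  show ?case
    by (simp add: typing_intros)
next
  case (Sub G T \<sigma> D \<tau>)
  with Sub.IH[where M = M and k = k and a = a] show ?case
    by (blast intro: typing_intros)
next
  case (CInter G C' \<sigma> D \<tau>)
  with CInter.IH(1)[where C = C and k = k and a = a] CInter.IH(2)[where C = C and k = k and a = a]
  show ?case
    by (simp add: typing_intros)
next
  case (CSub G C' \<sigma> D \<tau>)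
  with CSub.IH[where C = C and k = k and a = a] show ?case
    by (blast intro: typing_intros)
qed (auto simp: eq_renN_iff intro: typing_intros)

section \<open>Generation lemmas\<close>

lemma sub_Om_TArr: "wf_ty SC \<kappa> \<Longrightarrow> sub SR TOm \<rho> \<Longrightarrow> sub SD TOm (TArr \<kappa> \<rho>)"
  using sub.om_arr sub.arr_mono[OF sub_top] sub.trans by blast

lemma has_type_TArr_Om: "wf_ty SC \<kappa> \<Longrightarrow> has_type G M (TArr \<kappa> TOm) D"
  using sub_Om_TArr[of \<kappa> TOm] has_type_cmd_type.Om has_type_cmd_type.Sub by fastforce

lemma cmd_type_trivial: "sub SR TOm \<rho> \<Longrightarrow> cmd_type G C (TProd (TArr TOm \<rho>) TOm) D"
proof -
  assume "sub SR TOm \<rho>"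
  then have "sub SC (TProd TOm TOm) (TProd (TArr TOm \<rho>) TOm)"
    by (simp add: sub.prod_mono sub_Om_TArr)
  then have "sub SC TOm (TProd (TArr TOm \<rho>) TOm)"
    using sub.om_prod by (rule sub.trans[rotated])
  then show ?thesis
    using has_type_cmd_type.COm by (rule has_type_cmd_type.CSub[rotated])
qed

lemma arrow_closed_Lam_body:
  assumes "wf_basis G" and "wf_ctxt D"
  shows "arrow_closed (\<lambda>\<kappa> \<rho>. has_type (extend (head_meet \<kappa>) G) M (TArr (tail_meet \<kappa>) \<rho>) D)"
proof (rule arrow_closedI)
  fix \<kappa> :: "'a ity" assume "wf_ty SC \<kappa>"
  then show "has_type (extend (head_meet \<kappa>) G) M (TArr (tail_meet \<kappa>) TOm) D"
    by (simp add: wf_ty_head_tail_meet has_type_TArr_Om)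
next
  fix \<kappa> \<rho>1 \<rho>2 :: "'a ity"
  assume wf: "wf_ty SC \<kappa>" "wf_ty SR \<rho>1" "wf_ty SR \<rho>2"
    and "has_type (extend (head_meet \<kappa>) G) M (TArr (tail_meet \<kappa>) \<rho>1) D"
    and "has_type (extend (head_meet \<kappa>) G) M (TArr (tail_meet \<kappa>) \<rho>2) D"
  moreover have "sub SD (TInter (TArr (tail_meet \<kappa>) \<rho>1) (TArr (tail_meet \<kappa>) \<rho>2))
      (TArr (tail_meet \<kappa>) (TInter \<rho>1 \<rho>2))"
    using wf wf_ty_head_tail_meet by (blast intro: sub_arr_inter)
  ultimately show "has_type (extend (head_meet \<kappa>) G) M (TArr (tail_meet \<kappa>) (TInter \<rho>1 \<rho>2)) D"
    by (blast intro: typing_intros)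
next
  fix \<kappa> \<rho> \<kappa>' \<rho>' :: "'a ity"
  assume typed: "has_type (extend (head_meet \<kappa>) G) M (TArr (tail_meet \<kappa>) \<rho>) D"
    and "sub SC \<kappa>' \<kappa>" and "sub SR \<rho> \<rho>'"
  then have "sub SD (head_meet \<kappa>') (head_meet \<kappa>)" "sub SC (tail_meet \<kappa>') (tail_meet \<kappa>)"
    and arr: "sub SD (TArr (tail_meet \<kappa>) \<rho>) (TArr (tail_meet \<kappa>') \<rho>')"
    using head_tail_meet_mono sub.arr_mono by blast+
  then have "has_type (extend (head_meet \<kappa>') G) M (TArr (tail_meet \<kappa>) \<rho>) D"
    using has_type_env_le(1)[OF typed] basis_le_extend basis_le_refl ctxt_le_refl assms by blast
  then show "has_type (extend (head_meet \<kappa>') G) M (TArr (tail_meet \<kappa>') \<rho>') D"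
    using arr by (rule has_type_cmd_type.Sub)
qed

lemma has_type_Lam_arrows:
  assumes "has_type G (Lam M) \<sigma> D" and "wf_basis G" and "wf_ctxt D"
  shows "\<forall>(\<kappa>, \<rho>)\<in>set (arrows \<sigma>). has_type (extend (head_meet \<kappa>) G) M (TArr (tail_meet \<kappa>) \<rho>) D"
  using assms
proof (induction G "Lam M" \<sigma> D rule: has_type_induct)
  case (Abs \<delta> G \<kappa> \<rho> D)
  then have "wf_ty SC \<kappa>" "wf_ty SR \<rho>" "wf_ty SD \<delta>"
    using has_type_wf(1) wf_basis_extend by fastforce+
  then have "basis_le (extend (TInter \<delta> TOm) G) (extend \<delta> G)"
    and "sub SD (TArr \<kappa> \<rho>) (TArr (TInter \<kappa> TOm) \<rho>)"
    using Abs.prems by (simp_all add: basis_le_extend basis_le_refl sub_interL sub_refl sub.arr_mono)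
  with Abs have "has_type (extend (TInter \<delta> TOm) G) M (TArr (TInter \<kappa> TOm) \<rho>) D"
    by (meson has_type_env_le(1) ctxt_le_refl has_type_cmd_type.Sub)
  then show ?case
    by simp
next
  case (Sub G \<sigma> D \<tau>)
  then show ?case
    using arrow_closed_sub[OF arrow_closed_Lam_body] by blast
qed auto

lemma has_type_Lam_inv:
  assumes "has_type G (Lam M) (TArr (TProd \<delta> \<kappa>) \<rho>) D" and "wf_basis G" and "wf_ctxt D"
  shows "has_type (extend \<delta> G) M (TArr \<kappa> \<rho>) D"
proof -
  have typed: "has_type (extend (TInter \<delta> TOm) G) M (TArr (TInter \<kappa> TOm) \<rho>) D"
    using has_type_Lam_arrows[OF assms] by simp
  have "wf_ty SD \<delta>" "wf_ty SC \<kappa>" "wf_ty SR \<rho>"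
    using has_type_wf(1)[OF assms] by simp_all
  then have "basis_le (extend \<delta> G) (extend (TInter \<delta> TOm) G)"
    and "sub SD (TArr (TInter \<kappa> TOm) \<rho>) (TArr \<kappa> \<rho>)"
    using assms(2) by (simp_all add: basis_le_extend basis_le_refl sub_inter_Om sub_refl sub.arr_mono)
  with typed assms(3) show ?thesis
    by (meson has_type_env_le(1) ctxt_le_refl has_type_cmd_type.Sub)
qed

lemma arrow_closed_App_fun:
  "arrow_closed (\<lambda>\<kappa> \<rho>. \<exists>\<delta>. wf_ty SD \<delta> \<and> has_type G N \<delta> D \<and> has_type G M (TArr (TProd \<delta> \<kappa>) \<rho>) D)"
proof (rule arrow_closedI)
  fix \<kappa> :: "'a ity" assume "wf_ty SC \<kappa>"
  then show "\<exists>\<delta>. wf_ty SD \<delta> \<and> has_type G N \<delta> D \<and> has_type G M (TArr (TProd \<delta> \<kappa>) TOm) D"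
    by (intro exI[of _ TOm]) (simp add: has_type_TArr_Om typing_intros)
next
  fix \<kappa> \<rho>1 \<rho>2 :: "'a ity"
  assume wf: "wf_ty SC \<kappa>" "wf_ty SR \<rho>1" "wf_ty SR \<rho>2"
    and "\<exists>\<delta>. wf_ty SD \<delta> \<and> has_type G N \<delta> D \<and> has_type G M (TArr (TProd \<delta> \<kappa>) \<rho>1) D"
    and "\<exists>\<delta>. wf_ty SD \<delta> \<and> has_type G N \<delta> D \<and> has_type G M (TArr (TProd \<delta> \<kappa>) \<rho>2) D"
  then obtain \<delta>1 \<delta>2 where \<delta>1: "wf_ty SD \<delta>1" "has_type G N \<delta>1 D" "has_type G M (TArr (TProd \<delta>1 \<kappa>) \<rho>1) D"
    and \<delta>2: "wf_ty SD \<delta>2" "has_type G N \<delta>2 D" "has_type G M (TArr (TProd \<delta>2 \<kappa>) \<rho>2) D"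
    by blast
  let ?\<delta> = "TInter \<delta>1 \<delta>2"
  have "sub SD (TArr (TProd \<delta>1 \<kappa>) \<rho>1) (TArr (TProd ?\<delta> \<kappa>) \<rho>1)"
    and "sub SD (TArr (TProd \<delta>2 \<kappa>) \<rho>2) (TArr (TProd ?\<delta> \<kappa>) \<rho>2)"
    using wf \<delta>1(1) \<delta>2(1) by (simp_all add: sub.arr_mono sub.prod_mono sub_interL sub_interR sub_refl)
  then have "has_type G M (TInter (TArr (TProd ?\<delta> \<kappa>) \<rho>1) (TArr (TProd ?\<delta> \<kappa>) \<rho>2)) D"
    using \<delta>1(3) \<delta>2(3) by (meson has_type_cmd_type.Inter has_type_cmd_type.Sub)
  moreover have "sub SD (TInter (TArr (TProd ?\<delta> \<kappa>) \<rho>1) (TArr (TProd ?\<delta> \<kappa>) \<rho>2))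
      (TArr (TProd ?\<delta> \<kappa>) (TInter \<rho>1 \<rho>2))"
    using wf \<delta>1(1) \<delta>2(1) by (simp add: sub_arr_inter)
  ultimately have "has_type G M (TArr (TProd ?\<delta> \<kappa>) (TInter \<rho>1 \<rho>2)) D"
    by (rule has_type_cmd_type.Sub)
  moreover have "has_type G N ?\<delta> D"
    using \<delta>1(2) \<delta>2(2) by (rule has_type_cmd_type.Inter)
  ultimately show "\<exists>\<delta>. wf_ty SD \<delta> \<and> has_type G N \<delta> D \<and> has_type G M (TArr (TProd \<delta> \<kappa>) (TInter \<rho>1 \<rho>2)) D"
    using \<delta>1(1) \<delta>2(1) by (intro exI[of _ ?\<delta>]) simp
next
  fix \<kappa> \<rho> \<kappa>' \<rho>' :: "'a ity"
  assume "\<exists>\<delta>. wf_ty SD \<delta> \<and> has_type G N \<delta> D \<and> has_type G M (TArr (TProd \<delta> \<kappa>) \<rho>) D"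
    and "sub SC \<kappa>' \<kappa>" and "sub SR \<rho> \<rho>'"
  then show "\<exists>\<delta>. wf_ty SD \<delta> \<and> has_type G N \<delta> D \<and> has_type G M (TArr (TProd \<delta> \<kappa>') \<rho>') D"
    using sub.arr_mono[OF sub.prod_mono[OF sub_refl]] has_type_cmd_type.Sub by blast
qed

lemma has_type_App_arrows:
  assumes "has_type G (App M N) \<sigma> D" and "wf_basis G" and "wf_ctxt D"
  shows "\<forall>(\<kappa>, \<rho>)\<in>set (arrows \<sigma>).
    \<exists>\<delta>. wf_ty SD \<delta> \<and> has_type G N \<delta> D \<and> has_type G M (TArr (TProd \<delta> \<kappa>) \<rho>) D"
  using assms
proof (induction G "App M N" \<sigma> D rule: has_type_induct)
  case (App G \<delta> \<kappa> \<rho> D)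
  moreover have "wf_ty SD \<delta>"
    using App.hyps(3) App.prems by (rule has_type_wf(1))
  ultimately show ?case
    by auto
next
  case (Sub G \<sigma> D \<tau>)
  then show ?case
    using arrow_closed_sub[OF arrow_closed_App_fun] by blast
qed auto

lemma has_type_App_inv:
  assumes "has_type G (App M N) (TArr \<kappa> \<rho>) D" and "wf_basis G" and "wf_ctxt D"
  shows "\<exists>\<delta>. wf_ty SD \<delta> \<and> has_type G N \<delta> D \<and> has_type G M (TArr (TProd \<delta> \<kappa>) \<rho>) D"
  using has_type_App_arrows[OF assms] by simp

lemma arrow_closed_Mu_body:
  assumes "wf_basis G" and "wf_ctxt D"
  shows "arrow_closed (\<lambda>\<kappa> \<rho>. \<exists>\<kappa>'. wf_ty SC \<kappa>' \<and> cmd_type G C (TProd (TArr \<kappa>' \<rho>) \<kappa>') (extend \<kappa> D))"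
proof (rule arrow_closedI)
  fix \<kappa> :: "'a ity"
  show "\<exists>\<kappa>'. wf_ty SC \<kappa>' \<and> cmd_type G C (TProd (TArr \<kappa>' TOm) \<kappa>') (extend \<kappa> D)"
    by (intro exI[of _ TOm]) (simp add: cmd_type_trivial)
next
  fix \<kappa> \<rho>1 \<rho>2 :: "'a ity"
  assume wf: "wf_ty SC \<kappa>" "wf_ty SR \<rho>1" "wf_ty SR \<rho>2"
    and "\<exists>\<kappa>'. wf_ty SC \<kappa>' \<and> cmd_type G C (TProd (TArr \<kappa>' \<rho>1) \<kappa>') (extend \<kappa> D)"
    and "\<exists>\<kappa>'. wf_ty SC \<kappa>' \<and> cmd_type G C (TProd (TArr \<kappa>' \<rho>2) \<kappa>') (extend \<kappa> D)"
  then obtain \<kappa>1 \<kappa>2 where \<kappa>1: "wf_ty SC \<kappa>1" "cmd_type G C (TProd (TArr \<kappa>1 \<rho>1) \<kappa>1) (extend \<kappa> D)"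
    and \<kappa>2: "wf_ty SC \<kappa>2" "cmd_type G C (TProd (TArr \<kappa>2 \<rho>2) \<kappa>2) (extend \<kappa> D)"
    by blast
  let ?\<kappa> = "TInter \<kappa>1 \<kappa>2"
  have "sub SD (TArr \<kappa>1 \<rho>1) (TArr ?\<kappa> \<rho>1)" "sub SD (TArr \<kappa>2 \<rho>2) (TArr ?\<kappa> \<rho>2)"
    using wf \<kappa>1(1) \<kappa>2(1) by (simp_all add: sub.arr_mono sub_interL sub_interR sub_refl)
  then have "sub SD (TInter (TArr \<kappa>1 \<rho>1) (TArr \<kappa>2 \<rho>2)) (TArr ?\<kappa> (TInter \<rho>1 \<rho>2))"
    using wf \<kappa>1(1) \<kappa>2(1) sub_inter_mono sub_arr_inter sub.trans by (metis wf_ty.simps(2))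
  then have "sub SC (TProd (TInter (TArr \<kappa>1 \<rho>1) (TArr \<kappa>2 \<rho>2)) ?\<kappa>) (TProd (TArr ?\<kappa> (TInter \<rho>1 \<rho>2)) ?\<kappa>)"
    using \<kappa>1(1) \<kappa>2(1) by (simp add: sub.prod_mono sub_refl)
  moreover have "sub SC (TInter (TProd (TArr \<kappa>1 \<rho>1) \<kappa>1) (TProd (TArr \<kappa>2 \<rho>2) \<kappa>2))
      (TProd (TInter (TArr \<kappa>1 \<rho>1) (TArr \<kappa>2 \<rho>2)) ?\<kappa>)"
    using wf \<kappa>1(1) \<kappa>2(1) by (simp add: sub_prod_inter)
  moreover have "cmd_type G C (TInter (TProd (TArr \<kappa>1 \<rho>1) \<kappa>1) (TProd (TArr \<kappa>2 \<rho>2) \<kappa>2)) (extend \<kappa> D)"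
    using \<kappa>1(2) \<kappa>2(2) by (rule has_type_cmd_type.CInter)
  ultimately have "cmd_type G C (TProd (TArr ?\<kappa> (TInter \<rho>1 \<rho>2)) ?\<kappa>) (extend \<kappa> D)"
    by (meson has_type_cmd_type.CSub sub.trans)
  then show "\<exists>\<kappa>'. wf_ty SC \<kappa>' \<and> cmd_type G C (TProd (TArr \<kappa>' (TInter \<rho>1 \<rho>2)) \<kappa>') (extend \<kappa> D)"
    using \<kappa>1(1) \<kappa>2(1) by (intro exI[of _ ?\<kappa>]) simp
next
  fix \<kappa> \<rho> \<kappa>0 \<rho>' :: "'a ity"
  assume "\<exists>\<kappa>'. wf_ty SC \<kappa>' \<and> cmd_type G C (TProd (TArr \<kappa>' \<rho>) \<kappa>') (extend \<kappa> D)"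
    and "sub SC \<kappa>0 \<kappa>" and "sub SR \<rho> \<rho>'"
  then obtain \<kappa>' where \<kappa>': "wf_ty SC \<kappa>'" "cmd_type G C (TProd (TArr \<kappa>' \<rho>) \<kappa>') (extend \<kappa> D)"
    and le: "ctxt_le (extend \<kappa>0 D) (extend \<kappa> D)"
    "sub SC (TProd (TArr \<kappa>' \<rho>) \<kappa>') (TProd (TArr \<kappa>' \<rho>') \<kappa>')"
    using assms by (auto simp: ctxt_le_extend ctxt_le_refl sub.prod_mono sub.arr_mono sub_refl)
  then have "cmd_type G C (TProd (TArr \<kappa>' \<rho>') \<kappa>') (extend \<kappa>0 D)"
    using has_type_env_le(2) basis_le_refl[OF assms(1)] has_type_cmd_type.CSub by blast
  with \<kappa>'(1) show "\<exists>\<kappa>'. wf_ty SC \<kappa>' \<and> cmd_type G C (TProd (TArr \<kappa>' \<rho>') \<kappa>') (extend \<kappa>0 D)"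
    by blast
qed

lemma has_type_Mu_arrows:
  assumes "has_type G (Mu C) \<sigma> D" and "wf_basis G" and "wf_ctxt D"
  shows "\<forall>(\<kappa>, \<rho>)\<in>set (arrows \<sigma>).
    \<exists>\<kappa>'. wf_ty SC \<kappa>' \<and> cmd_type G C (TProd (TArr \<kappa>' \<rho>) \<kappa>') (extend \<kappa> D)"
  using assms
proof (induction G "Mu C" \<sigma> D rule: has_type_induct)
  case (Mu G \<kappa>' \<rho> \<kappa> D)
  moreover have "wf_ctxt (extend \<kappa> D)"
    using Mu.prems(2) Mu.hyps(2) by (simp add: wf_ctxt_extend)
  then have "wf_ty SC (TProd (TArr \<kappa>' \<rho>) \<kappa>')"
    using Mu.hyps(1) Mu.prems(1) has_type_wf(2) by blast
  ultimately show ?case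
    by auto
next
  case (Sub G \<sigma> D \<tau>)
  then show ?case
    using arrow_closed_sub[OF arrow_closed_Mu_body] by blast
qed auto

lemma has_type_Mu_inv:
  assumes "has_type G (Mu C) (TArr \<kappa> \<rho>) D" and "wf_basis G" and "wf_ctxt D"
  shows "\<exists>\<kappa>'. wf_ty SC \<kappa>' \<and> cmd_type G C (TProd (TArr \<kappa>' \<rho>) \<kappa>') (extend \<kappa> D)"
  using has_type_Mu_arrows[OF assms] by simp

lemma cmd_type_Cmd_inv:
  assumes "cmd_type G (Cmd a M) \<kappa> D" and "wf_basis G" and "wf_ctxt D"
  shows "\<exists>\<delta>. has_type G M \<delta> D \<and> sub SC (TProd \<delta> (D a)) \<kappa>"
  using assms
proof (induction G "Cmd a M" \<kappa> D rule: cmd_type_induct)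
  case (Cmd G \<delta> D)
  then have "wf_ty SC (TProd \<delta> (D a))"
    using has_type_wf(1) by (auto simp: wf_ctxt_def)
  with Cmd show ?case
    using sub_refl by blast
next
  case (CInter G \<sigma> D \<tau>)
  then obtain \<delta>1 \<delta>2 where "has_type G M \<delta>1 D" "sub SC (TProd \<delta>1 (D a)) \<sigma>"
    and "has_type G M \<delta>2 D" "sub SC (TProd \<delta>2 (D a)) \<tau>"
    by blast
  moreover from this have "wf_ty SD \<delta>1" "wf_ty SD \<delta>2" "wf_ty SC (D a)"
    using sub_wf by fastforce+
  then have "sub SC (TProd (TInter \<delta>1 \<delta>2) (D a)) (TProd \<delta>1 (D a))"
    and "sub SC (TProd (TInter \<delta>1 \<delta>2) (D a)) (TProd \<delta>2 (D a))"
    by (simp_all add: sub.prod_mono sub_interL sub_interR sub_refl)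
  ultimately show ?case
    by (meson has_type_cmd_type.Inter sub.glb sub.trans)
next
  case (COm G D)
  then have "sub SC (TProd TOm (D a)) TOm"
    by (simp add: sub_top wf_ctxt_def)
  then show ?case
    using has_type_cmd_type.Om by blast
next
  case (CSub G \<sigma> D \<tau>)
  then show ?case
    by (meson sub.trans)
qed

lemma cmd_type_Cmd_TProd_inv:
  assumes "cmd_type G (Cmd a M) (TProd \<delta> \<kappa>) D" and "wf_basis G" and "wf_ctxt D"
  shows "has_type G M \<delta> D \<and> sub SC (D a) \<kappa>"
  using cmd_type_Cmd_inv[OF assms] sub_TProd_inv has_type_cmd_type.Sub by blast

lemma has_type_Lam_cong:
  assumes "has_type G (Lam M) \<sigma> D"
    and "\<And>\<delta> \<kappa> \<rho>. wf_ty SD \<delta> \<Longrightarrow> has_type (extend \<delta> G) M (TArr \<kappa> \<rho>) D \<Longrightarrow>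
      has_type (extend \<delta> G') M' (TArr \<kappa> \<rho>) D'"
  shows "has_type G' (Lam M') \<sigma> D'"
  using assms
  by (induction G "Lam M" \<sigma> D rule: has_type_induct) (auto intro: typing_intros)

lemma has_type_App_cong:
  assumes "has_type G (App M N) \<sigma> D"
    and "\<And>\<tau>. has_type G M \<tau> D \<Longrightarrow> has_type G' M' \<tau> D'"
    and "\<And>\<tau>. has_type G N \<tau> D \<Longrightarrow> has_type G' N' \<tau> D'"
  shows "has_type G' (App M' N') \<sigma> D'"
  using assms
  by (induction G "App M N" \<sigma> D rule: has_type_induct) (auto intro: typing_intros)

lemma has_type_Mu_cong:
  assumes "has_type G (Mu C) \<sigma> D" and "wf_basis G" and "wf_ctxt D"
    and "\<And>\<kappa> \<kappa>' \<rho>. wf_ty SC \<kappa> \<Longrightarrow> wf_ty SC \<kappa>' \<Longrightarrow> cmd_type G C (TProd (TArr \<kappa>' \<rho>) \<kappa>') (extend \<kappa> D) \<Longrightarrow>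
      \<exists>\<kappa>''. cmd_type G' C' (TProd (TArr \<kappa>'' \<rho>) \<kappa>'') (extend \<kappa> D')"
  shows "has_type G' (Mu C') \<sigma> D'"
  using assms
proof (induction G "Mu C" \<sigma> D rule: has_type_induct)
  case (Mu G \<kappa>' \<rho> \<kappa> D)
  moreover have "wf_ty SC \<kappa>'"
    using Mu.hyps Mu.prems(1,2) has_type_wf(2) wf_ctxt_extend by fastforce
  ultimately show ?case
    by (meson typing_intros(5))
qed (auto intro: typing_intros)

lemma cmd_type_Cmd_cong:
  assumes "cmd_type G (Cmd a M) \<kappa> D" and "wf_basis G" and "wf_ctxt D"
    and "\<And>\<tau>. has_type G M \<tau> D \<Longrightarrow> has_type G M' \<tau> D"
  shows "cmd_type G (Cmd a M') \<kappa> D"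
  using cmd_type_Cmd_inv[OF assms(1-3)] assms(4) has_type_cmd_type.Cmd has_type_cmd_type.CSub by blast

section \<open>Structural substitution\<close>

lemma extend_upd: "extend \<kappa> (D(a := \<kappa>')) = (extend \<kappa> D)(Suc a := \<kappa>')"
  by (rule ext) (simp add: extend_def split: nat.split)

lemma extend_upd_0: "(extend \<kappa> D)(0 := \<kappa>') = extend \<kappa>' D"
  by (rule ext) (simp add: extend_def split: nat.split)

lemma has_type_Var_ctxt: "has_type G (Var x) \<sigma> D \<Longrightarrow> has_type G (Var x) \<sigma> D'"
  by (induction G "Var x" \<sigma> D rule: has_type_induct) (auto intro: typing_intros)

text \<open>Commands are only ever typed by types of
the shape \<open>(\<kappa>\<^sub>1 \<rightarrow> \<rho>) \<times> \<kappa>\<^sub>1\<close> (rule \<open>\<mu>\<close>), and \<open>\<kappa>\<^sub>1\<close> changes under the substitution.\<close>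

lemma cmd_type_structc_Cmd:
  assumes "wf_basis G" and "wf_ctxt D" and "D k = TProd \<delta> \<kappa>" and L: "has_type G L \<delta> (D(k := \<kappa>))"
    and "cmd_type G (Cmd b M) (TProd (TArr \<kappa>\<^sub>1 \<rho>) \<kappa>\<^sub>1) D"
    and IH: "\<And>\<sigma>. has_type G M \<sigma> D \<Longrightarrow> has_type G (struct M k L) \<sigma> (D(k := \<kappa>))"
  shows "\<exists>\<kappa>\<^sub>2. cmd_type G (structc (Cmd b M) k L) (TProd (TArr \<kappa>\<^sub>2 \<rho>) \<kappa>\<^sub>2) (D(k := \<kappa>))"
proof -
  have M: "has_type G M (TArr \<kappa>\<^sub>1 \<rho>) D" and "sub SC (D b) \<kappa>\<^sub>1"
    using cmd_type_Cmd_TProd_inv assms(1,2,5) by blast+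
  have wf: "wf_ty SC \<kappa>\<^sub>1" "wf_ty SR \<rho>"
    using has_type_wf(1)[OF M assms(1,2)] by simp_all
  show ?thesis
  proof (cases "b = k")
    case True
    with \<open>sub SC (D b) \<kappa>\<^sub>1\<close> assms(3) wf have "sub SD (TArr \<kappa>\<^sub>1 \<rho>) (TArr (TProd \<delta> \<kappa>) \<rho>)"
      by (simp add: sub.arr_mono sub_refl)
    with M have "has_type G (struct M k L) (TArr (TProd \<delta> \<kappa>) \<rho>) (D(k := \<kappa>))"
      by (blast intro: IH has_type_cmd_type.Sub)
    then have "has_type G (App (struct M k L) L) (TArr \<kappa> \<rho>) (D(k := \<kappa>))"
      using L by (rule has_type_cmd_type.App)
    then have "cmd_type G (Cmd k (App (struct M k L) L)) (TProd (TArr \<kappa> \<rho>) \<kappa>) (D(k := \<kappa>))"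
      by (simp add: cmd_type_Cmd)
    with True show ?thesis
      by auto
  next
    case False
    with IH M have "cmd_type G (Cmd b (struct M k L)) (TProd (TArr \<kappa>\<^sub>1 \<rho>) (D b)) (D(k := \<kappa>))"
      by (simp add: cmd_type_Cmd)
    moreover have "sub SC (TProd (TArr \<kappa>\<^sub>1 \<rho>) (D b)) (TProd (TArr \<kappa>\<^sub>1 \<rho>) \<kappa>\<^sub>1)"
      using \<open>sub SC (D b) \<kappa>\<^sub>1\<close> wf by (simp add: sub.prod_mono sub_refl)
    ultimately show ?thesis
      using False by (auto intro: has_type_cmd_type.CSub)
  qed
qed

lemma has_type_struct:
  "wf_basis G \<Longrightarrow> wf_ctxt D \<Longrightarrow> D k = TProd \<delta> \<kappa> \<Longrightarrow> has_type G L \<delta> (D(k := \<kappa>)) \<Longrightarrow>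
    has_type G T \<sigma> D \<Longrightarrow> has_type G (struct T k L) \<sigma> (D(k := \<kappa>))"
  "wf_basis G \<Longrightarrow> wf_ctxt D \<Longrightarrow> D k = TProd \<delta> \<kappa> \<Longrightarrow> has_type G L \<delta> (D(k := \<kappa>)) \<Longrightarrow>
    cmd_type G C (TProd (TArr \<kappa>\<^sub>1 \<rho>) \<kappa>\<^sub>1) D \<Longrightarrow>
    \<exists>\<kappa>\<^sub>2. cmd_type G (structc C k L) (TProd (TArr \<kappa>\<^sub>2 \<rho>) \<kappa>\<^sub>2) (D(k := \<kappa>))"
proof (induction T and C arbitrary: G D \<sigma> k L \<delta> \<kappa> and G D \<rho> \<kappa>\<^sub>1 k L \<delta> \<kappa>)
  case (Var x)
  then show ?case
    by (simp add: has_type_Var_ctxt)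
next
  case (Lam M)
  have "has_type (extend \<delta>' G) (struct M k (liftV 0 L)) (TArr \<kappa>' \<rho>) (D(k := \<kappa>))"
    if "wf_ty SD \<delta>'" and "has_type (extend \<delta>' G) M (TArr \<kappa>' \<rho>) D" for \<delta>' \<kappa>' \<rho>
  proof (rule Lam.IH)
    show "wf_basis (extend \<delta>' G)"
      using Lam.prems(1) that(1) by (rule wf_basis_extend)
    show "has_type (extend \<delta>' G) (liftV 0 L) \<delta> (D(k := \<kappa>))"
      unfolding extend_eq_insert_at_0 by (rule has_type_liftV(1)[OF Lam.prems(4)])
  qed (use Lam.prems that in simp_all)
  then have "has_type G (Lam (struct M k (liftV 0 L))) \<sigma> (D(k := \<kappa>))"
    by (rule has_type_Lam_cong[OF Lam.prems(5)])
  then show ?case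
    by (simp add: fun_upd_def)
next
  case (App M N)
  then show ?case
    using has_type_App_cong[OF App.prems(5)] by simp
next
  case (Mu C)
  have "\<exists>\<kappa>''. cmd_type G (structc C (Suc k) (liftN 0 L)) (TProd (TArr \<kappa>'' \<rho>) \<kappa>'')
      (extend \<kappa>0 (D(k := \<kappa>)))"
    if "wf_ty SC \<kappa>0" and "cmd_type G C (TProd (TArr \<kappa>' \<rho>) \<kappa>') (extend \<kappa>0 D)" for \<kappa>0 \<kappa>' \<rho>
  proof -
    have L: "has_type G (liftN 0 L) \<delta> ((extend \<kappa>0 D)(Suc k := \<kappa>))"
      unfolding extend_upd[symmetric] unfolding extend_eq_insert_at_0
      by (rule has_type_liftN(1)[OF Mu.prems(4)])
    have "extend \<kappa>0 D (Suc k) = TProd \<delta> \<kappa>"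
      using Mu.prems(3) by simp
    from Mu.IH[OF Mu.prems(1) wf_ctxt_extend[OF Mu.prems(2) that(1)] this _ that(2)] L
    show ?thesis
      by (simp add: extend_upd) (simp add: fun_upd_def)
  qed
  then have "has_type G (Mu (structc C (Suc k) (liftN 0 L))) \<sigma> (D(k := \<kappa>))"
    using has_type_Mu_cong[OF Mu.prems(5,1,2)] by blast
  then show ?case
    by (simp add: fun_upd_def)
next
  case (Cmd b M)
  then show ?case
    using cmd_type_structc_Cmd[OF Cmd.prems] Cmd.IH[OF Cmd.prems(1-4)] by (simp add: fun_upd_def)
qed

definition push_typable ::
  "(nat \<Rightarrow> 'a::complete_lattice ity) \<Rightarrow> trm \<Rightarrow> (nat \<Rightarrow> 'a ity) \<Rightarrow> nat \<Rightarrow> 'a ity \<Rightarrow> trm \<Rightarrow> 'a ity \<Rightarrow> bool"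
  where "push_typable G L D k \<kappa> T \<sigma> \<longleftrightarrow>
    (\<exists>\<delta>. wf_ty SD \<delta> \<and> has_type G L \<delta> D \<and> has_type G T \<sigma> (D(k := TProd \<delta> \<kappa>)))"

lemma push_typable_Om: "push_typable G L D k \<kappa> T TOm"
  unfolding push_typable_def by (intro exI[of _ TOm]) (simp add: has_type_cmd_type.Om)

lemma push_typable_Sub: "push_typable G L D k \<kappa> T \<sigma> \<Longrightarrow> sub SD \<sigma> \<tau> \<Longrightarrow> push_typable G L D k \<kappa> T \<tau>"
  unfolding push_typable_def by (blast intro: has_type_cmd_type.Sub)

lemma push_typable_combine:
  assumes "wf_basis G" and "wf_ctxt D" and "wf_ty SC \<kappa>"
    and "push_typable G L D k \<kappa> T \<sigma>" and "push_typable G L D k \<kappa> U \<tau>"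
  shows "\<exists>\<delta>. wf_ty SD \<delta> \<and> has_type G L \<delta> D \<and>
    has_type G T \<sigma> (D(k := TProd \<delta> \<kappa>)) \<and> has_type G U \<tau> (D(k := TProd \<delta> \<kappa>))"
proof -
  obtain \<delta>1 \<delta>2 where \<delta>1: "wf_ty SD \<delta>1" "has_type G L \<delta>1 D" "has_type G T \<sigma> (D(k := TProd \<delta>1 \<kappa>))"
    and \<delta>2: "wf_ty SD \<delta>2" "has_type G L \<delta>2 D" "has_type G U \<tau> (D(k := TProd \<delta>2 \<kappa>))"
    using assms(4,5) unfolding push_typable_def by blast
  have "ctxt_le (D(k := TProd (TInter \<delta>1 \<delta>2) \<kappa>)) (D(k := TProd \<delta>1 \<kappa>))"
    and "ctxt_le (D(k := TProd (TInter \<delta>1 \<delta>2) \<kappa>)) (D(k := TProd \<delta>2 \<kappa>))"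
    using assms(2,3) \<delta>1(1) \<delta>2(1)
    by (simp_all add: ctxt_le_upd sub.prod_mono sub_interL sub_interR sub_refl)
  then have "has_type G T \<sigma> (D(k := TProd (TInter \<delta>1 \<delta>2) \<kappa>))"
    and "has_type G U \<tau> (D(k := TProd (TInter \<delta>1 \<delta>2) \<kappa>))"
    using \<delta>1(3) \<delta>2(3) has_type_env_le(1) basis_le_refl[OF assms(1)] by blast+
  moreover have "has_type G L (TInter \<delta>1 \<delta>2) D"
    using \<delta>1(2) \<delta>2(2) by (rule has_type_cmd_type.Inter)
  ultimately show ?thesis
    using \<delta>1(1) \<delta>2(1) by (intro exI[of _ "TInter \<delta>1 \<delta>2"]) simp
qed

lemma push_typable_Inter:
  assumes "wf_basis G" and "wf_ctxt D" and "wf_ty SC \<kappa>"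
    and "push_typable G L D k \<kappa> T \<sigma>" and "push_typable G L D k \<kappa> T \<tau>"
  shows "push_typable G L D k \<kappa> T (TInter \<sigma> \<tau>)"
  using push_typable_combine[OF assms] unfolding push_typable_def
  by (blast intro: has_type_cmd_type.Inter)

lemma push_typable_Lam:
  assumes "has_type G (Lam M') \<sigma> D" and "wf_basis G" and "wf_ctxt D" and "wf_ty SC \<kappa>"
    and "\<And>\<delta>' \<kappa>' \<rho>. wf_ty SD \<delta>' \<Longrightarrow> has_type (extend \<delta>' G) M' (TArr \<kappa>' \<rho>) D \<Longrightarrow>
      \<exists>\<delta>. wf_ty SD \<delta> \<and> has_type G L \<delta> D \<and> has_type (extend \<delta>' G) M (TArr \<kappa>' \<rho>) (D(k := TProd \<delta> \<kappa>))"
  shows "push_typable G L D k \<kappa> (Lam M) \<sigma>"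
  using assms
proof (induction G "Lam M'" \<sigma> D rule: has_type_induct)
  case (Abs \<delta>' G \<kappa>' \<rho> D)
  then obtain \<delta> where "wf_ty SD \<delta>" "has_type G L \<delta> D"
    "has_type (extend \<delta>' G) M (TArr \<kappa>' \<rho>) (D(k := TProd \<delta> \<kappa>))"
    using Abs.prems(4)[OF _ Abs.hyps(1)] Abs.hyps(3) by blast
  with Abs.hyps(3) show ?case
    unfolding push_typable_def by (auto intro: typing_intros)
next
  case (Inter G \<sigma> D \<tau>)
  then show ?case
    by (simp add: push_typable_Inter)
next
  case (Om G D)
  show ?case
    by (rule push_typable_Om)
next
  case (Sub G \<sigma> D \<tau>)
  then show ?case
    by (blast intro: push_typable_Sub)
qed

lemma push_typable_App:
  assumes "has_type G (App M' N') \<sigma> D" and "wf_basis G" and "wf_ctxt D" and "wf_ty SC \<kappa>"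
    and "\<And>\<tau>. has_type G M' \<tau> D \<Longrightarrow> push_typable G L D k \<kappa> M \<tau>"
    and "\<And>\<tau>. has_type G N' \<tau> D \<Longrightarrow> push_typable G L D k \<kappa> N \<tau>"
  shows "push_typable G L D k \<kappa> (App M N) \<sigma>"
  using assms
proof (induction G "App M' N'" \<sigma> D rule: has_type_induct)
  case (App G \<delta>' \<kappa>' \<rho> D)
  then obtain \<delta> where "wf_ty SD \<delta>" "has_type G L \<delta> D"
    "has_type G M (TArr (TProd \<delta>' \<kappa>') \<rho>) (D(k := TProd \<delta> \<kappa>))"
    "has_type G N \<delta>' (D(k := TProd \<delta> \<kappa>))"
    using push_typable_combine[of G D \<kappa> L k M _ N] by blast
  then show ?case
    unfolding push_typable_def by (auto intro: typing_intros)
next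
  case (Inter G \<sigma> D \<tau>)
  then show ?case
    by (simp add: push_typable_Inter)
next
  case (Om G D)
  show ?case
    by (rule push_typable_Om)
next
  case (Sub G \<sigma> D \<tau>)
  then show ?case
    by (blast intro: push_typable_Sub)
qed

lemma push_typable_Mu:
  assumes "has_type G (Mu C') \<sigma> D" and "wf_basis G" and "wf_ctxt D" and "wf_ty SC \<kappa>"
    and "\<And>\<kappa>0 \<kappa>' \<rho>. wf_ty SC \<kappa>0 \<Longrightarrow> wf_ty SC \<kappa>' \<Longrightarrow>
      cmd_type G C' (TProd (TArr \<kappa>' \<rho>) \<kappa>') (extend \<kappa>0 D) \<Longrightarrow>
      \<exists>\<delta> \<kappa>''. wf_ty SD \<delta> \<and> has_type G L \<delta> D \<and>
        cmd_type G C (TProd (TArr \<kappa>'' \<rho>) \<kappa>'') (extend \<kappa>0 (D(k := TProd \<delta> \<kappa>)))"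
  shows "push_typable G L D k \<kappa> (Mu C) \<sigma>"
  using assms
proof (induction G "Mu C'" \<sigma> D rule: has_type_induct)
  case (Mu G \<kappa>' \<rho> \<kappa>0 D)
  moreover have "wf_ctxt (extend \<kappa>0 D)"
    using Mu.prems(2) Mu.hyps(2) by (simp add: wf_ctxt_extend)
  then have "wf_ty SC \<kappa>'"
    using Mu.hyps(1) Mu.prems(1) has_type_wf(2) by fastforce
  ultimately obtain \<delta> \<kappa>'' where "wf_ty SD \<delta>" "has_type G L \<delta> D"
    "cmd_type G C (TProd (TArr \<kappa>'' \<rho>) \<kappa>'') (extend \<kappa>0 (D(k := TProd \<delta> \<kappa>)))"
    using Mu.prems(4)[OF _ _ Mu.hyps(1)] Mu.hyps(2) \<open>wf_ty SC \<kappa>'\<close> by blast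
  with Mu.hyps(2) show ?case
    unfolding push_typable_def by (auto intro: typing_intros)
next
  case (Inter G \<sigma> D \<tau>)
  then show ?case
    by (simp add: push_typable_Inter)
next
  case (Om G D)
  show ?case
    by (rule push_typable_Om)
next
  case (Sub G \<sigma> D \<tau>)
  then show ?case
    by (blast intro: push_typable_Sub)
qed

lemma cmd_type_structc_Cmd_expand:
  assumes "wf_basis G" and "wf_ctxt D"
    and "cmd_type G (structc (Cmd b M) k L) (TProd (TArr \<kappa>\<^sub>1 \<rho>) \<kappa>\<^sub>1) D"
    and IH: "\<And>\<sigma>. has_type G (struct M k L) \<sigma> D \<Longrightarrow> push_typable G L D k (D k) M \<sigma>"
  shows "\<exists>\<delta> \<kappa>\<^sub>2. wf_ty SD \<delta> \<and> wf_ty SC \<kappa>\<^sub>2 \<and> has_type G L \<delta> D \<and>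
    cmd_type G (Cmd b M) (TProd (TArr \<kappa>\<^sub>2 \<rho>) \<kappa>\<^sub>2) (D(k := TProd \<delta> (D k)))"
proof -
  have wf_k: "wf_ty SC (D k)"
    using assms(2) by (simp add: wf_ctxt_def)
  show ?thesis
  proof (cases "b = k")
    case True
    then have "has_type G (App (struct M k L) L) (TArr \<kappa>\<^sub>1 \<rho>) D" and "sub SC (D k) \<kappa>\<^sub>1"
      using cmd_type_Cmd_TProd_inv[OF _ assms(1,2)] assms(3) by auto
    then obtain \<delta>1 where \<delta>1: "wf_ty SD \<delta>1" "has_type G L \<delta>1 D"
      "has_type G (struct M k L) (TArr (TProd \<delta>1 \<kappa>\<^sub>1) \<rho>) D"
      using has_type_App_inv assms(1,2) by blast
    moreover from this obtain \<delta>2 where \<delta>2: "wf_ty SD \<delta>2" "has_type G L \<delta>2 D"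
      "has_type G M (TArr (TProd \<delta>1 \<kappa>\<^sub>1) \<rho>) (D(k := TProd \<delta>2 (D k)))"
      using IH unfolding push_typable_def by blast
    moreover have "wf_ty SR \<rho>"
      using has_type_wf(1)[OF \<delta>1(3) assms(1,2)] by simp
    ultimately have "ctxt_le (D(k := TProd (TInter \<delta>1 \<delta>2) (D k))) (D(k := TProd \<delta>2 (D k)))"
      and arr: "sub SD (TArr (TProd \<delta>1 \<kappa>\<^sub>1) \<rho>) (TArr (TProd (TInter \<delta>1 \<delta>2) (D k)) \<rho>)"
      using assms(2) wf_k \<open>sub SC (D k) \<kappa>\<^sub>1\<close>
      by (simp_all add: ctxt_le_upd sub.arr_mono sub.prod_mono sub_interL sub_interR sub_refl)
    then have "has_type G M (TArr (TProd \<delta>1 \<kappa>\<^sub>1) \<rho>) (D(k := TProd (TInter \<delta>1 \<delta>2) (D k)))"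
      using \<delta>2(3) has_type_env_le(1) basis_le_refl[OF assms(1)] by blast
    then have "has_type G M (TArr (TProd (TInter \<delta>1 \<delta>2) (D k)) \<rho>) (D(k := TProd (TInter \<delta>1 \<delta>2) (D k)))"
      using arr by (rule has_type_cmd_type.Sub)
    then have "cmd_type G (Cmd k M) (TProd (TArr (TProd (TInter \<delta>1 \<delta>2) (D k)) \<rho>) (TProd (TInter \<delta>1 \<delta>2) (D k)))
        (D(k := TProd (TInter \<delta>1 \<delta>2) (D k)))"
      by (simp add: cmd_type_Cmd)
    moreover have "has_type G L (TInter \<delta>1 \<delta>2) D"
      using \<delta>1(2) \<delta>2(2) by (rule has_type_cmd_type.Inter)
    moreover have "wf_ty SD (TInter \<delta>1 \<delta>2)" "wf_ty SC (TProd (TInter \<delta>1 \<delta>2) (D k))"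
      using \<delta>1(1) \<delta>2(1) wf_k by simp_all
    ultimately show ?thesis
      using True by blast
  next
    case False
    then have "has_type G (struct M k L) (TArr \<kappa>\<^sub>1 \<rho>) D" and sub: "sub SC (D b) \<kappa>\<^sub>1"
      using cmd_type_Cmd_TProd_inv[OF _ assms(1,2)] assms(3) by auto
    then obtain \<delta> where \<delta>: "wf_ty SD \<delta>" "has_type G L \<delta> D"
      "has_type G M (TArr \<kappa>\<^sub>1 \<rho>) (D(k := TProd \<delta> (D k)))"
      using IH unfolding push_typable_def by blast
    have wf: "wf_ty SC \<kappa>\<^sub>1" "wf_ty SD (TArr \<kappa>\<^sub>1 \<rho>)"
      using sub_wf[OF sub] assms(3) by (auto dest: has_type_wf(2)[OF _ assms(1,2)])
    have "cmd_type G (Cmd b M) (TProd (TArr \<kappa>\<^sub>1 \<rho>) (D b)) (D(k := TProd \<delta> (D k)))"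
      using \<delta>(3) False by (simp add: cmd_type_Cmd)
    moreover have "sub SC (TProd (TArr \<kappa>\<^sub>1 \<rho>) (D b)) (TProd (TArr \<kappa>\<^sub>1 \<rho>) \<kappa>\<^sub>1)"
      using sub wf(2) by (simp add: sub.prod_mono sub_refl)
    ultimately have "cmd_type G (Cmd b M) (TProd (TArr \<kappa>\<^sub>1 \<rho>) \<kappa>\<^sub>1) (D(k := TProd \<delta> (D k)))"
      by (rule has_type_cmd_type.CSub)
    with \<delta>(1,2) wf(1) show ?thesis
      by blast
  qed
qed

lemma has_type_struct_expand:
  "wf_basis G \<Longrightarrow> wf_ctxt D \<Longrightarrow> has_type G (struct T k L) \<sigma> D \<Longrightarrow> push_typable G L D k (D k) T \<sigma>"
  "wf_basis G \<Longrightarrow> wf_ctxt D \<Longrightarrow> cmd_type G (structc C k L) (TProd (TArr \<kappa>\<^sub>1 \<rho>) \<kappa>\<^sub>1) D \<Longrightarrow>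
    \<exists>\<delta> \<kappa>\<^sub>2. wf_ty SD \<delta> \<and> wf_ty SC \<kappa>\<^sub>2 \<and> has_type G L \<delta> D \<and>
      cmd_type G C (TProd (TArr \<kappa>\<^sub>2 \<rho>) \<kappa>\<^sub>2) (D(k := TProd \<delta> (D k)))"
proof (induction T and C arbitrary: G D \<sigma> k L and G D \<kappa>\<^sub>1 \<rho> k L)
  case (Var x)
  then show ?case
    unfolding push_typable_def
    by (intro exI[of _ TOm]) (auto intro: has_type_Var_ctxt has_type_cmd_type.Om)
next
  case (Lam M)
  have "\<exists>\<delta>. wf_ty SD \<delta> \<and> has_type G L \<delta> D \<and>
      has_type (extend \<delta>' G) M (TArr \<kappa>' \<rho>) (D(k := TProd \<delta> (D k)))"
    if \<delta>': "wf_ty SD \<delta>'" and typed: "has_type (extend \<delta>' G) (struct M k (liftV 0 L)) (TArr \<kappa>' \<rho>) D"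
    for \<delta>' \<kappa>' \<rho>
  proof -
    obtain \<delta> where \<delta>: "wf_ty SD \<delta>" "has_type (extend \<delta>' G) (liftV 0 L) \<delta> D"
      "has_type (extend \<delta>' G) M (TArr \<kappa>' \<rho>) (D(k := TProd \<delta> (D k)))"
      using Lam.IH[OF wf_basis_extend[OF Lam.prems(1) \<delta>'] Lam.prems(2) typed]
      unfolding push_typable_def by blast
    moreover have "has_type G L \<delta> D"
      using has_type_unliftV(1)[OF \<delta>(2) extend_eq_insert_at_0] by simp
    ultimately show ?thesis
      by blast
  qed
  moreover have "wf_ty SC (D k)"
    using Lam.prems(2) by (simp add: wf_ctxt_def)
  ultimately show ?case
    using push_typable_Lam[of G "struct M k (liftV 0 L)"] Lam.prems by simp
next
  case (App M N)
  moreover have "wf_ty SC (D k)"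
    using App.prems(2) by (simp add: wf_ctxt_def)
  ultimately show ?case
    using push_typable_App[of G "struct M k L" "struct N k L"] by simp
next
  case (Mu C)
  have "\<exists>\<delta> \<kappa>''. wf_ty SD \<delta> \<and> has_type G L \<delta> D \<and>
      cmd_type G C (TProd (TArr \<kappa>'' \<rho>) \<kappa>'') (extend \<kappa>0 (D(k := TProd \<delta> (D k))))"
    if \<kappa>0: "wf_ty SC \<kappa>0"
      and typed: "cmd_type G (structc C (Suc k) (liftN 0 L)) (TProd (TArr \<kappa>' \<rho>) \<kappa>') (extend \<kappa>0 D)"
    for \<kappa>0 \<kappa>' \<rho>
  proof -
    obtain \<delta> \<kappa>'' where \<delta>: "wf_ty SD \<delta>" "has_type G (liftN 0 L) \<delta> (extend \<kappa>0 D)"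
      "cmd_type G C (TProd (TArr \<kappa>'' \<rho>) \<kappa>'') ((extend \<kappa>0 D)(Suc k := TProd \<delta> (D k)))"
      using Mu.IH[OF Mu.prems(1) wf_ctxt_extend[OF Mu.prems(2) \<kappa>0] typed] by (auto simp: fun_upd_def)
    moreover have "has_type G L \<delta> D"
      using has_type_unliftN(1)[OF \<delta>(2) extend_eq_insert_at_0] by simp
    ultimately show ?thesis
      by (auto simp: extend_upd)
  qed
  moreover have "wf_ty SC (D k)"
    using Mu.prems(2) by (simp add: wf_ctxt_def)
  ultimately show ?case
    using push_typable_Mu[of G "structc C (Suc k) (liftN 0 L)"] Mu.prems by simp
next
  case (Cmd b M)
  then show ?case
    using cmd_type_structc_Cmd_expand[OF Cmd.prems] Cmd.IH[OF Cmd.prems(1,2)] by blast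
qed

section \<open>Invariance under reduction and expansion\<close>

lemma has_type_beta_iff:
  assumes "wf_basis G" and "wf_ctxt D"
  shows "has_type G (App (Lam M) N) \<sigma> D \<longleftrightarrow> has_type G (substV M 0 N) \<sigma> D"
proof
  assume "has_type G (App (Lam M) N) \<sigma> D"
  then show "has_type G (substV M 0 N) \<sigma> D"
  proof (rule has_type_transfer_arrows[OF _ assms])
    fix \<kappa> \<rho> assume "has_type G (App (Lam M) N) (TArr \<kappa> \<rho>) D"
    then obtain \<delta> where "has_type G N \<delta> D" "has_type G (Lam M) (TArr (TProd \<delta> \<kappa>) \<rho>) D"
      using has_type_App_inv assms by blast
    then show "has_type G (substV M 0 N) (TArr \<kappa> \<rho>) D"
      using has_type_Lam_inv assms has_type_substV(1) extend_eq_insert_at_0 by metis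
  qed
next
  assume "has_type G (substV M 0 N) \<sigma> D"
  then obtain \<delta> where \<delta>: "wf_ty SD \<delta>" "has_type G N \<delta> D" "has_type (insert_at 0 \<delta> G) M \<sigma> D"
    using has_type_substV_expand(1)[OF _ HOL.refl assms] by blast
  then have "has_type (extend \<delta> G) M \<sigma> D"
    by (simp add: extend_eq_insert_at_0)
  then show "has_type G (App (Lam M) N) \<sigma> D"
    using wf_basis_extend[OF assms(1) \<delta>(1)] assms(2)
  proof (rule has_type_transfer_arrows)
    fix \<kappa> \<rho> assume "has_type (extend \<delta> G) M (TArr \<kappa> \<rho>) D"
    with \<delta>(1) have "has_type G (Lam M) (TArr (TProd \<delta> \<kappa>) \<rho>) D"
      by (simp add: typing_intros)
    then show "has_type G (App (Lam M) N) (TArr \<kappa> \<rho>) D"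
      using \<delta>(2) by (rule has_type_cmd_type.App)
  qed
qed

lemma has_type_mu_iff:
  assumes "wf_basis G" and "wf_ctxt D"
  shows "has_type G (App (Mu C) N) \<sigma> D \<longleftrightarrow> has_type G (Mu (structc C 0 (liftN 0 N))) \<sigma> D"
proof
  assume "has_type G (App (Mu C) N) \<sigma> D"
  then show "has_type G (Mu (structc C 0 (liftN 0 N))) \<sigma> D"
  proof (rule has_type_transfer_arrows[OF _ assms])
    fix \<kappa> \<rho> assume "has_type G (App (Mu C) N) (TArr \<kappa> \<rho>) D"
    then obtain \<delta> where N: "has_type G N \<delta> D" and Mu: "has_type G (Mu C) (TArr (TProd \<delta> \<kappa>) \<rho>) D"
      using has_type_App_inv assms by blast
    then obtain \<kappa>' where C: "cmd_type G C (TProd (TArr \<kappa>' \<rho>) \<kappa>') (extend (TProd \<delta> \<kappa>) D)"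
      using has_type_Mu_inv assms by blast
    have "wf_ty SC \<kappa>" "wf_ty SD \<delta>"
      using has_type_wf(1)[OF Mu assms] by simp_all
    then have wf: "wf_ctxt (extend (TProd \<delta> \<kappa>) D)"
      using assms(2) by (simp add: wf_ctxt_extend)
    have "has_type G (liftN 0 N) \<delta> ((extend (TProd \<delta> \<kappa>) D)(0 := \<kappa>))"
      unfolding extend_upd_0 unfolding extend_eq_insert_at_0 using N by (rule has_type_liftN(1))
    with has_type_struct(2)[OF assms(1) wf _ _ C] obtain \<kappa>''
      where "cmd_type G (structc C 0 (liftN 0 N)) (TProd (TArr \<kappa>'' \<rho>) \<kappa>'') ((extend (TProd \<delta> \<kappa>) D)(0 := \<kappa>))"
      by (metis extend_simps(1))
    then have "cmd_type G (structc C 0 (liftN 0 N)) (TProd (TArr \<kappa>'' \<rho>) \<kappa>'') (extend \<kappa> D)"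
      by (simp add: extend_upd_0)
    with \<open>wf_ty SC \<kappa>\<close> show "has_type G (Mu (structc C 0 (liftN 0 N))) (TArr \<kappa> \<rho>) D"
      by (simp add: typing_intros)
  qed
next
  assume "has_type G (Mu (structc C 0 (liftN 0 N))) \<sigma> D"
  then show "has_type G (App (Mu C) N) \<sigma> D"
  proof (rule has_type_transfer_arrows[OF _ assms])
    fix \<kappa> \<rho> assume Mu: "has_type G (Mu (structc C 0 (liftN 0 N))) (TArr \<kappa> \<rho>) D"
    then obtain \<kappa>' where C: "cmd_type G (structc C 0 (liftN 0 N)) (TProd (TArr \<kappa>' \<rho>) \<kappa>') (extend \<kappa> D)"
      using has_type_Mu_inv assms by blast
    have "wf_ty SC \<kappa>"
      using has_type_wf(1)[OF Mu assms] by simp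
    with assms(2) have "wf_ctxt (extend \<kappa> D)"
      by (rule wf_ctxt_extend)
    with has_type_struct_expand(2)[OF assms(1) _ C] obtain \<delta> \<kappa>'' where \<delta>: "wf_ty SD \<delta>"
      "has_type G (liftN 0 N) \<delta> (extend \<kappa> D)"
      "cmd_type G C (TProd (TArr \<kappa>'' \<rho>) \<kappa>'') ((extend \<kappa> D)(0 := TProd \<delta> (extend \<kappa> D 0)))"
      by blast
    have "has_type G (Mu C) (TArr (TProd \<delta> \<kappa>) \<rho>) D"
      using \<delta>(1,3) \<open>wf_ty SC \<kappa>\<close> by (simp add: extend_upd_0 typing_intros)
    moreover have "has_type G N \<delta> D"
      using has_type_unliftN(1)[OF \<delta>(2) extend_eq_insert_at_0] by simp
    ultimately show "has_type G (App (Mu C) N) (TArr \<kappa> \<rho>) D"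
      by (rule has_type_cmd_type.App)
  qed
qed

definition cmd_typable :: "(nat \<Rightarrow> 'a::complete_lattice ity) \<Rightarrow> cmd \<Rightarrow> 'a ity \<Rightarrow> (nat \<Rightarrow> 'a ity) \<Rightarrow> bool"
  where "cmd_typable G C \<rho> D \<longleftrightarrow> (\<exists>\<kappa>. wf_ty SC \<kappa> \<and> cmd_type G C (TProd (TArr \<kappa> \<rho>) \<kappa>) D)"

lemma cmd_typable_ren_iff:
  assumes "wf_basis G" and "wf_ctxt D"
  shows "cmd_typable G (Cmd a (Mu C)) \<rho> D \<longleftrightarrow> cmd_typable G (renNc C 0 a) \<rho> D"
proof
  assume "cmd_typable G (Cmd a (Mu C)) \<rho> D"
  then obtain \<kappa> where Mu: "has_type G (Mu C) (TArr \<kappa> \<rho>) D" and "sub SC (D a) \<kappa>"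
    using cmd_type_Cmd_TProd_inv assms unfolding cmd_typable_def by blast
  moreover have "wf_ty SR \<rho>"
    using has_type_wf(1)[OF Mu assms] by simp
  ultimately have "sub SD (TArr \<kappa> \<rho>) (TArr (D a) \<rho>)"
    by (simp add: sub.arr_mono sub_refl)
  with Mu have "has_type G (Mu C) (TArr (D a) \<rho>) D"
    by (rule has_type_cmd_type.Sub)
  then obtain \<kappa>' where "wf_ty SC \<kappa>'" "cmd_type G C (TProd (TArr \<kappa>' \<rho>) \<kappa>') (extend (D a) D)"
    using has_type_Mu_inv assms by blast
  then show "cmd_typable G (renNc C 0 a) \<rho> D"
    unfolding cmd_typable_def extend_eq_insert_at_0 using has_type_renN(2) by blast
next
  assume "cmd_typable G (renNc C 0 a) \<rho> D"
  then obtain \<kappa> where "cmd_type G C (TProd (TArr \<kappa> \<rho>) \<kappa>) (insert_at 0 (D a) D)"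
    unfolding cmd_typable_def using has_type_renN_expand(2) by blast
  moreover have "wf_ty SC (D a)"
    using assms(2) by (simp add: wf_ctxt_def)
  ultimately have "has_type G (Mu C) (TArr (D a) \<rho>) D"
    by (simp add: extend_eq_insert_at_0 typing_intros)
  then have "cmd_type G (Cmd a (Mu C)) (TProd (TArr (D a) \<rho>) (D a)) D"
    by (rule has_type_cmd_type.Cmd)
  with \<open>wf_ty SC (D a)\<close> show "cmd_typable G (Cmd a (Mu C)) \<rho> D"
    unfolding cmd_typable_def by blast
qed

lemma typing_red_iff:
  "red M N \<Longrightarrow> wf_basis G \<Longrightarrow> wf_ctxt D \<Longrightarrow> has_type G M \<sigma> D \<longleftrightarrow> has_type G N \<sigma> D"
  "redc C C' \<Longrightarrow> wf_basis G \<Longrightarrow> wf_ctxt D \<Longrightarrow> cmd_typable G C \<rho> D \<longleftrightarrow> cmd_typable G C' \<rho> D"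
proof (induction arbitrary: G D \<sigma> and G D \<rho> rule: red_redc.inducts)
  case (beta M N)
  then show ?case
    by (rule has_type_beta_iff)
next
  case (mu C N)
  then show ?case
    by (rule has_type_mu_iff)
next
  case (ren a C)
  then show ?case
    by (rule cmd_typable_ren_iff)
next
  case (lam M M')
  then have "has_type (extend \<delta> G) M \<tau> D \<longleftrightarrow> has_type (extend \<delta> G) M' \<tau> D" if "wf_ty SD \<delta>" for \<delta> \<tau>
    using that wf_basis_extend by blast
  then show ?case
    using has_type_Lam_cong by meson
next
  case (appL M M' N)
  then show ?case
    using has_type_App_cong by meson
next
  case (appR N N' M)
  then show ?case
    using has_type_App_cong by meson
next
  case (muC C C')
  then have "cmd_typable G C \<rho> (extend \<kappa> D) \<longleftrightarrow> cmd_typable G C' \<rho> (extend \<kappa> D)" if "wf_ty SC \<kappa>" for \<kappa> \<rho>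
    using that wf_ctxt_extend by blast
  then show ?case
    using has_type_Mu_cong muC.prems unfolding cmd_typable_def by meson
next
  case (cmdC M M' a)
  then show ?case
    using cmd_type_Cmd_cong unfolding cmd_typable_def by meson
qed

theorem has_type_lmu_eq:
  assumes "lmu_eq M N" and "wf_basis G" and "wf_ctxt D" and "has_type G M \<sigma> D"
  shows "has_type G N \<sigma> D"
proof -
  have "(symclp red)\<^sup>*\<^sup>* M N"
    using assms(1) unfolding lmu_eq_def equivclp_def .
  then show ?thesis
    using assms(4)
    by induction (auto elim: symclpE simp: typing_red_iff(1)[OF _ assms(2,3)])
qed

theorem theorem5p1:
  fixes M N :: trm and G D :: "nat \<Rightarrow> 'a::complete_lattice ity" and \<delta> :: "'a ity"
  assumes "omega_algebraic TYPE('a)"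
    and "is_basis G" and "is_context D"
    and "lmu_eq M N"
    and "has_type G M \<delta> D"
  shows "has_type G N \<delta> D"
proof (rule has_type_lmu_eq[OF assms(4) _ _ assms(5)])
  show "wf_basis G"
    using assms(2) by (simp add: is_basis_def wf_basis_def)
  show "wf_ctxt D"
    using assms(3) by (simp add: is_context_def wf_ctxt_def)
qed

end
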